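(* Let $\rho_1,\rho_2\colon\mathrm{Isom}(\mathbf H^1_{\mathbb C})_o\to\mathrm{Isom}(\mathbf H^\infty_{\mathbb C})_o$ be irreducible representations with $\ell(\rho_1)=\ell(\rho_2)$, having the same distinguished boundary points $\eta_1,\eta_2$ (i.e. $\eta_1$ is fixed by all $\rho_i(g(\lambda,b))$ and $\eta_2$ by all $\rho_i(g(\lambda,0))$, $i=1,2$), and let $K_1,K_2$ be their functions $K$ computed with the same isotropic representatives $\eta_1,\eta_2$, $B(\eta_1,\eta_2)=1$. Then $K_1(b)+K_2(b)\neq0$ for every $b\neq0$.
   Context: $\mathcal H$: separable complex Hilbert space with strongly non-degenerate Hermitian form $B$ (linear in first variable) of signature $(1,\infty)$; $\mathbf H^\infty_{\mathbb C}=\{[v]:B(v,v)>0\}$, $\cosh d([v],[w])=|B(v,w)|/\sqrt{B(v,v)B(w,w)}$, boundary = isotropic lines, $\mathrm{Isom}(\mathbf H^\infty_{\mathbb C})_o=PU(B)$. $\mathbf H^1_{\mathbb C}$: $\mathbb C^2$ with $B(z,w)=z_1\bar w_1-z_2\bar w_2$, $\xi_{1,2}=(e_1\pm e_2)/\sqrt2$; $g(\lambda,b)\in SU(1,1)$ has matrix $\begin{pmatrix}\lambda&ib\\0&\lambda^{-1}\end{pmatrix}$ in basis $(\xi_1,\xi_2)$. Representations are orbitally continuous; irreducible = no fixed point in $\mathbf H^\infty_{\mathbb C}\cup\partial\mathbf H^\infty_{\mathbb C}$, no invariant pair of boundary points, no proper invariant complex hyperbolic subspace. For such $\rho$, $\eta_1$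 is the unique common fixed boundary point of the $\rho(g(\lambda,b))$ and $\eta_2$ the other endpoint of the common axis of the $\rho(g(\lambda,0))$. With $E=\eta_1^\perp\cap\eta_2^\perp$, the lift $T_b\in U(B)$ of $\rho(g(1,b))$ with $T_b\eta_1=\eta_1$ satisfies $T_b\eta_2=K(b)\eta_1+\eta_2+c(b)$, $K(b)\in\mathbb C$, $c(b)\in E$. $\ell(\rho)$ is the $t>0$ with $\inf_xd(\rho(g(\lambda,0))x,x)=t|\ln\lambda|$. *)

theory Defs
  imports "HOL-Analysis.Analysis"
begin

text \<open>A complex Hilbert space is modelled as a real Hilbert space (type class
  real_inner + complete_space) together with an orthogonal complex structure J
  (multiplication by the imaginary unit).\<close>

definition csc :: "('v::real_vector \<Rightarrow> 'v) \<Rightarrow> complex \<Rightarrow> 'v \<Rightarrow> 'v" where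
  "csc J z v = Re z *\<^sub>R v + Im z *\<^sub>R J v"

definition cspan1 :: "('v::real_vector \<Rightarrow> 'v) \<Rightarrow> 'v \<Rightarrow> 'v set" where
  "cspan1 J v = {csc J z v | z. True}"

definition complex_structure :: "('v::real_inner \<Rightarrow> 'v) \<Rightarrow> bool" where
  "complex_structure J \<longleftrightarrow> linear J \<and> (\<forall>v. J (J v) = - v) \<and> (\<forall>v w. J v \<bullet> J w = v \<bullet> w)"

definition sesquilinear_hermitian ::
  "('v::real_inner \<Rightarrow> 'v) \<Rightarrow> ('v \<Rightarrow> 'v \<Rightarrow> complex) \<Rightarrow> bool" where
  "sesquilinear_hermitian J B \<longleftrightarrow>
     (\<forall>u v w. B (u + v) w = B u w + B v w) \<and>
     (\<forall>z v w. B (csc J z v) w = z * B v w) \<and>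
     (\<forall>v w. B w v = cnj (B v w))"

definition strongly_nondegenerate ::
  "('v::{real_inner,complete_space} \<Rightarrow> 'v) \<Rightarrow> ('v \<Rightarrow> 'v \<Rightarrow> complex) \<Rightarrow> bool" where
  "strongly_nondegenerate J B \<longleftrightarrow>
     (\<exists>C. \<forall>v w. cmod (B v w) \<le> C * norm v * norm w) \<and>
     (\<forall>w. (\<forall>v. B v w = 0) \<longrightarrow> w = 0) \<and>
     (\<forall>f :: 'v \<Rightarrow> complex. bounded_linear f \<and> (\<forall>v. f (J v) = \<i> * f v) \<longrightarrow>
         (\<exists>w. \<forall>v. f v = B v w))"

definition signature_1_inf ::
  "('v::real_vector \<Rightarrow> 'v) \<Rightarrow> ('v \<Rightarrow> 'v \<Rightarrow> complex) \<Rightarrow> bool" where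
  "signature_1_inf J B \<longleftrightarrow>
     (\<exists>v. Re (B v v) > 0) \<and>
     \<not> (\<exists>v w. \<forall>a b. (a, b) \<noteq> (0, 0) \<longrightarrow>
            Re (B (csc J a v + csc J b w) (csc J a v + csc J b w)) > 0) \<and>
     (\<forall>n::nat. \<exists>u :: nat \<Rightarrow> 'v. \<forall>i<n. \<forall>j<n. B (u i) (u j) = (if i = j then -1 else 0))"

definition hyp_setting ::
  "('v::{real_inner,complete_space} \<Rightarrow> 'v) \<Rightarrow> ('v \<Rightarrow> 'v \<Rightarrow> complex) \<Rightarrow> bool" where
  "hyp_setting J B \<longleftrightarrow>
     complex_structure J \<and>
     (\<exists>D :: 'v set. countable D \<and> closure D = UNIV) \<and>
     sesquilinear_hermitian J B \<and> strongly_nondegenerate J B \<and> signature_1_inf J B"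

text \<open>Points of the complex hyperbolic space are represented by vectors v with
  B(v,v) > 0 (the point is the line [v]); boundary points by nonzero isotropic vectors.\<close>
definition hdist :: "('v \<Rightarrow> 'v \<Rightarrow> complex) \<Rightarrow> 'v \<Rightarrow> 'v \<Rightarrow> real" where
  "hdist B v w = arcosh (cmod (B v w) / sqrt (Re (B v v) * Re (B w w)))"

definition unitary_B ::
  "('v::real_normed_vector \<Rightarrow> 'v) \<Rightarrow> ('v \<Rightarrow> 'v \<Rightarrow> complex) \<Rightarrow> ('v \<Rightarrow> 'v) \<Rightarrow> bool" where
  "unitary_B J B T \<longleftrightarrow> bounded_linear T \<and> (\<forall>v. T (J v) = J (T v)) \<and> bij T \<and>
     (\<forall>v w. B (T v) (T w) = B v w)"

definition B11 :: "complex^2 \<Rightarrow> complex^2 \<Rightarrow> complex" where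
  "B11 z w = z $ 1 * cnj (w $ 1) - z $ 2 * cnj (w $ 2)"

definition SU11 :: "(complex^2^2) set" where
  "SU11 = {A. det A = 1 \<and> (\<forall>z w. B11 (A *v z) (A *v w) = B11 z w)}"

definition xi1 :: "complex^2" where
  "xi1 = (\<chi> i. if i = 1 then complex_of_real (1 / sqrt 2) else complex_of_real (1 / sqrt 2))"

definition xi2 :: "complex^2" where
  "xi2 = (\<chi> i. if i = 1 then complex_of_real (1 / sqrt 2) else - complex_of_real (1 / sqrt 2))"

text \<open>g(lambda,b): the matrix (lambda, ib; 0, 1/lambda) in the basis (xi1, xi2).\<close>
definition gmat :: "real \<Rightarrow> real \<Rightarrow> complex^2^2" where
  "gmat l b = (THE A. A *v xi1 = complex_of_real l *s xi1 \<and>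
                      A *v xi2 = (\<i> * complex_of_real b) *s xi1 + complex_of_real (1 / l) *s xi2)"

text \<open>A representation of Isom(H^1_C)_o = PU(1,1) = SU(1,1)/{+-1} into PU(B) is given by
  choosing, for each g in SU(1,1), a lift rho g in U(B) of its image; the lifts are
  multiplicative up to unit scalars and -1 acts by a scalar.  It is required to be
  orbitally continuous.\<close>
definition representation ::
  "('v::{real_inner,complete_space} \<Rightarrow> 'v) \<Rightarrow> ('v \<Rightarrow> 'v \<Rightarrow> complex) \<Rightarrow>
   (complex^2^2 \<Rightarrow> 'v \<Rightarrow> 'v) \<Rightarrow> bool" where
  "representation J B \<rho> \<longleftrightarrow>
     (\<forall>g\<in>SU11. unitary_B J B (\<rho> g)) \<and>
     (\<forall>g\<in>SU11. \<forall>h\<in>SU11. \<exists>\<mu>. cmod \<mu> = 1 \<and> (\<forall>v. \<rho> (g ** h) v = csc J \<mu> (\<rho> g (\<rho> h v)))) \<and>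
     (\<exists>\<mu>. cmod \<mu> = 1 \<and> (\<forall>v. \<rho> (- mat 1) v = csc J \<mu> v)) \<and>
     (\<forall>v g0. Re (B v v) > 0 \<and> g0 \<in> SU11 \<longrightarrow>
        ((\<lambda>g. hdist B (\<rho> g v) (\<rho> g0 v)) \<longlongrightarrow> 0) (at g0 within SU11))"

definition complex_subspace :: "('v::real_vector \<Rightarrow> 'v) \<Rightarrow> 'v set \<Rightarrow> bool" where
  "complex_subspace J W \<longleftrightarrow> subspace W \<and> J ` W \<subseteq> W"

definition irreducible ::
  "('v::{real_inner,complete_space} \<Rightarrow> 'v) \<Rightarrow> ('v \<Rightarrow> 'v \<Rightarrow> complex) \<Rightarrow>
   (complex^2^2 \<Rightarrow> 'v \<Rightarrow> 'v) \<Rightarrow> bool" where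
  "irreducible J B \<rho> \<longleftrightarrow>
     \<comment> \<open>no fixed point in H^infty or in its boundary\<close>
     \<not> (\<exists>v. v \<noteq> 0 \<and> Re (B v v) \<ge> 0 \<and> (\<forall>g\<in>SU11. \<rho> g v \<in> cspan1 J v)) \<and>
     \<comment> \<open>no invariant pair of (distinct) boundary points\<close>
     \<not> (\<exists>v w. v \<noteq> 0 \<and> w \<noteq> 0 \<and> B v v = 0 \<and> B w w = 0 \<and> w \<notin> cspan1 J v \<and>
          (\<forall>g\<in>SU11. (\<rho> g v \<in> cspan1 J v \<and> \<rho> g w \<in> cspan1 J w) \<or>
                     (\<rho> g v \<in> cspan1 J w \<and> \<rho> g w \<in> cspan1 J v))) \<and>
     \<comment> \<open>no proper invariant complex hyperbolic subspace\<close>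
     \<not> (\<exists>W. complex_subspace J W \<and> closed W \<and> W \<noteq> UNIV \<and> (\<exists>v\<in>W. Re (B v v) > 0) \<and>
          (\<forall>g\<in>SU11. \<rho> g ` W \<subseteq> W))"

definition ell ::
  "('v \<Rightarrow> 'v \<Rightarrow> complex) \<Rightarrow> (complex^2^2 \<Rightarrow> 'v \<Rightarrow> 'v) \<Rightarrow> real" where
  "ell B \<rho> = (THE t. t > 0 \<and>
     (\<forall>l>0. (INF v\<in>{v. Re (B v v) > 0}. hdist B (\<rho> (gmat l 0) v) v) = t * \<bar>ln l\<bar>))"

definition Kfun ::
  "('v::real_vector \<Rightarrow> 'v) \<Rightarrow> ('v \<Rightarrow> 'v \<Rightarrow> complex) \<Rightarrow> (complex^2^2 \<Rightarrow> 'v \<Rightarrow> 'v) \<Rightarrow>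
   'v \<Rightarrow> 'v \<Rightarrow> real \<Rightarrow> complex" where
  "Kfun J B \<rho> \<eta>1 \<eta>2 b = (THE k. \<exists>\<mu> c. cmod \<mu> = 1 \<and>
      csc J \<mu> (\<rho> (gmat 1 b) \<eta>1) = \<eta>1 \<and>
      B c \<eta>1 = 0 \<and> B c \<eta>2 = 0 \<and>
      csc J \<mu> (\<rho> (gmat 1 b) \<eta>2) = csc J k \<eta>1 + \<eta>2 + c)"

end

theory Submission
  imports Defs
begin

(* Each representation separately satisfies Re K(b) > 0 for b ~= 0.

   Normalise the lift T of rho(g(1,b)) by T eta1 = eta1; the eigenvalue of rho(g(1,b)) on eta1
   is unimodular since g(1,4b) is both the fourth power of g(1,b) and a conjugate of it.
   Then T eta2 = K eta1 + eta2 + c with c in E, and isotropy of T eta2 reads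
   2 Re K + B(c,c) = 0.  E is negative definite, being orthogonal to the positive vector
   eta1 + eta2, so it suffices that c ~= 0, i.e. that rho(g(1,b)) does not preserve the
   span V of eta1 and eta2.  If it did, conjugation by the diagonal elements g(l,0) and
   inversion would make every unipotent g(1,b') preserve V.  The Weyl element preserves V
   too: some rho(g(l,0)) is loxodromic (otherwise, by orbital continuity, all of SU(1,1)
   would fix [eta1 + eta2]), and all its isotropic eigenvectors lie in V.  So V would be
   a proper invariant complex hyperbolic subspace, contradicting irreducibility. *)

section \<open>Complex structures and Hermitian forms\<close>

lemma csc_add_scalar: "csc J (z + z') v = csc J z v + csc J z' v"
  by (simp add: csc_def scaleR_left_distrib)

lemma csc_diff_scalar: "csc J (z - z') v = csc J z v - csc J z' v"
  by (simp add: csc_def scaleR_diff_left)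

lemma csc_one [simp]: "csc J 1 v = v"
  by (simp add: csc_def)

lemma csc_zero [simp]: "csc J 0 v = 0"
  by (simp add: csc_def)

lemma csc_minus_one: "csc J (- 1) v = - v"
  by (simp add: csc_def)

lemma csc_of_real [simp]: "csc J (complex_of_real r) v = r *\<^sub>R v"
  by (simp add: csc_def)

lemma csc_imaginary_unit: "csc J \<i> v = J v"
  by (simp add: csc_def)

lemma cspan1_iff: "x \<in> cspan1 J v \<longleftrightarrow> (\<exists>z. x = csc J z v)"
  by (auto simp: cspan1_def)

lemma csc_in_cspan1 [simp]: "csc J z v \<in> cspan1 J v"
  by (auto simp: cspan1_def)

definition csc_closed :: "('v::real_vector \<Rightarrow> 'v) \<Rightarrow> 'v set \<Rightarrow> bool" where
  "csc_closed J W \<longleftrightarrow> (\<forall>z. \<forall>w\<in>W. csc J z w \<in> W)"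

locale complex_structure_space =
  fixes J :: "'v::real_inner \<Rightarrow> 'v"
  assumes complex_structure: "complex_structure J"
begin

lemma linear_J: "linear J"
  using complex_structure by (simp add: complex_structure_def)

lemma J_J [simp]: "J (J v) = - v"
  using complex_structure by (simp add: complex_structure_def)

lemma csc_add_vector: "csc J z (v + w) = csc J z v + csc J z w"
  by (simp add: csc_def linear_add[OF linear_J] scaleR_right_distrib)

lemma csc_zero_vector [simp]: "csc J z 0 = 0"
  by (simp add: csc_def linear_0[OF linear_J])

lemma csc_csc: "csc J z (csc J z' v) = csc J (z * z') v"
  by (simp add: csc_def linear_add[OF linear_J] linear_scale[OF linear_J] algebra_simps)

lemma csc_cancel_right:
  assumes "v \<noteq> 0" and "csc J a v = csc J a' v"
  shows "a = a'"
proof (rule ccontr)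
  assume "a \<noteq> a'"
  have "csc J (inverse (a - a')) (csc J (a - a') v) = 0"
    using assms(2) by (simp add: csc_diff_scalar)
  with \<open>a \<noteq> a'\<close> have "v = 0"
    by (simp add: csc_csc)
  with assms(1) show False ..
qed

lemma csc_eq_iff_inverse:
  assumes "\<mu> \<noteq> 0"
  shows "csc J \<mu> v = w \<longleftrightarrow> v = csc J (inverse \<mu>) w"
  using assms by (auto simp: csc_csc)

lemma csc_closed_cspan1: "csc_closed J (cspan1 J p)"
  unfolding csc_closed_def by (metis cspan1_iff csc_csc csc_in_cspan1)

end

locale hermitian_form = complex_structure_space J
  for J :: "'v::real_inner \<Rightarrow> 'v" +
  fixes B :: "'v \<Rightarrow> 'v \<Rightarrow> complex"
  assumes sesquilinear_hermitian: "sesquilinear_hermitian J B"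
begin

lemma B_add_left: "B (u + v) w = B u w + B v w"
  using sesquilinear_hermitian unfolding sesquilinear_hermitian_def by blast

lemma B_csc_left: "B (csc J z v) w = z * B v w"
  using sesquilinear_hermitian unfolding sesquilinear_hermitian_def by blast

lemma B_cnj: "B w v = cnj (B v w)"
  using sesquilinear_hermitian unfolding sesquilinear_hermitian_def by blast

lemma B_add_right: "B w (u + v) = B w u + B w v"
  by (metis B_add_left B_cnj complex_cnj_add)

lemma B_csc_right: "B v (csc J z w) = cnj z * B v w"
  by (metis B_csc_left B_cnj complex_cnj_mult)

lemma B_minus_left: "B (- v) w = - B v w"
  using B_csc_left[of "- 1" v w] by (simp add: csc_minus_one)

lemma B_minus_right: "B w (- v) = - B w v"
  using B_csc_right[of w "- 1" v] by (simp add: csc_minus_one)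

lemma B_diff_left: "B (u - v) w = B u w - B v w"
  using B_add_left[of u "- v" w] by (simp add: B_minus_left)

lemma B_diff_right: "B w (u - v) = B w u - B w v"
  using B_add_right[of w u "- v"] by (simp add: B_minus_right)

lemma B_zero_left [simp]: "B 0 w = 0"
  using B_csc_left[of 0 0 w] by simp

lemma B_zero_right [simp]: "B w 0 = 0"
  using B_csc_right[of w 0 0] by simp

lemma B_scaleR_left: "B (r *\<^sub>R v) w = r * B v w"
  using B_csc_left[of "complex_of_real r" v w] by simp

lemmas B_simps = B_add_left B_add_right B_csc_left B_csc_right B_diff_left B_diff_right
  B_minus_left B_minus_right

lemma B_self_real: "B v v = complex_of_real (Re (B v v))"
  by (metis B_cnj Reals_cnj_iff complex_is_Real_iff of_real_Re)

lemma B_orthogonal_sym: "B v w = 0 \<longleftrightarrow> B w v = 0"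
  by (metis B_cnj complex_cnj_zero_iff)

lemma B_csc_self: "B (csc J z v) (csc J z v) = complex_of_real ((cmod z)\<^sup>2) * B v v"
  by (simp add: B_csc_left B_csc_right mult.assoc mult.commute[of "cnj z"] flip: complex_norm_square)

lemma Re_B_csc_self: "Re (B (csc J z v) (csc J z v)) = (cmod z)\<^sup>2 * Re (B v v)"
  by (simp add: B_csc_self)

lemma Re_B_isotropic_shift:
  assumes "B e e = 0"
  shows "Re (B (e + csc J (complex_of_real s * cnj (B f e)) f) (e + csc J (complex_of_real s * cnj (B f e)) f))
    = s * (cmod (B f e))\<^sup>2 * (2 + s * Re (B f f))"
proof -
  define \<beta> z where "\<beta> = B f e" and "z = complex_of_real s * cnj \<beta>"
  have z\<beta>: "z * \<beta> = complex_of_real (s * (cmod \<beta>)\<^sup>2)"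
    by (simp add: z_def mult.assoc mult.commute[of "cnj \<beta>"] flip: complex_norm_square)
  have "B (e + csc J z f) (e + csc J z f) = B e e + B e (csc J z f) + B (csc J z f) e + B (csc J z f) (csc J z f)"
    by (simp add: B_add_left B_add_right)
  also have "\<dots> = cnj (z * \<beta>) + z * \<beta> + complex_of_real ((cmod z)\<^sup>2 * Re (B f f))"
    using assms B_cnj[of e f] B_self_real[of f] unfolding B_csc_self
    by (simp add: B_csc_left B_csc_right \<beta>_def)
  also have "\<dots> = complex_of_real (2 * (s * (cmod \<beta>)\<^sup>2) + (\<bar>s\<bar> * cmod \<beta>)\<^sup>2 * Re (B f f))"
    by (simp only: z\<beta> complex_cnj_complex_of_real) (simp add: z_def norm_mult)
  finally show ?thesis
    by (simp add: \<beta>_def z_def power_mult_distrib power2_eq_square algebra_simps)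
qed

lemma B_orthogonal_sum_self:
  assumes "B v w = 0"
  shows "B (v + w) (v + w) = B v v + B w w"
  using assms B_orthogonal_sym[of v w] by (simp add: B_add_left B_add_right)

end

locale hyperbolic_form = hermitian_form J B
  for J :: "'v::{real_inner,complete_space} \<Rightarrow> 'v" and B +
  assumes signature: "signature_1_inf J B"
    and nondegenerate: "strongly_nondegenerate J B"
begin

lemma B_nondegenerate: "(\<And>v. B v w = 0) \<Longrightarrow> w = 0"
  using nondegenerate by (simp add: strongly_nondegenerate_def)

lemma bounded_linear_B_left: "bounded_linear (\<lambda>v. B v w)"
proof -
  obtain C where C: "\<And>v w. cmod (B v w) \<le> C * norm v * norm w"
    using nondegenerate by (auto simp: strongly_nondegenerate_def)
  show ?thesis
  proof (rule bounded_linear_intro[where K = "C * norm w"])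
    show "B (x + y) w = B x w + B y w" for x y
      by (rule B_add_left)
    show "B (r *\<^sub>R x) w = r *\<^sub>R B x w" for r x
      by (simp add: B_scaleR_left scaleR_conv_of_real)
    show "norm (B x w) \<le> norm x * (C * norm w)" for x
      using C[of x w] by (simp add: mult_ac)
  qed
qed

lemma continuous_on_B_left: "continuous_on S (\<lambda>v. B v w)"
  using bounded_linear_B_left linear_continuous_on by blast

text \<open>This is where the positive index 1 of the signature enters.\<close>
lemma orthogonal_to_positive_not_positive:
  assumes p: "Re (B p p) > 0" and ep: "B e p = 0"
  shows "Re (B e e) \<le> 0"
proof (rule ccontr)
  assume e: "\<not> Re (B e e) \<le> 0"
  have "Re (B (csc J a p + csc J b e) (csc J a p + csc J b e)) > 0" if "(a, b) \<noteq> (0, 0)" for a b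
  proof -
    have "B (csc J a p) (csc J b e) = 0"
      using ep by (simp add: B_csc_left B_csc_right B_orthogonal_sym)
    then have "Re (B (csc J a p + csc J b e) (csc J a p + csc J b e))
        = (cmod a)\<^sup>2 * Re (B p p) + (cmod b)\<^sup>2 * Re (B e e)"
      by (simp add: B_orthogonal_sum_self Re_B_csc_self)
    also have "\<dots> > 0"
    proof -
      have "(cmod a)\<^sup>2 * Re (B p p) > 0 \<or> (cmod b)\<^sup>2 * Re (B e e) > 0"
        using that p e by auto
      moreover have "(cmod a)\<^sup>2 * Re (B p p) \<ge> 0" "(cmod b)\<^sup>2 * Re (B e e) \<ge> 0"
        using p e by simp_all
      ultimately show ?thesis
        by linarith
    qed
    finally show ?thesis .
  qed
  then show False
    using signature unfolding signature_1_inf_def by blast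
qed

lemma isotropic_orthogonal_to_positive_eq_0:
  assumes p: "Re (B p p) > 0" and ep: "B e p = 0" and ee: "B e e = 0"
  shows "e = 0"
proof (rule ccontr)
  assume "e \<noteq> 0"
  then obtain f where "B f e \<noteq> 0"
    using B_nondegenerate by blast
  define f' where "f' = f - csc J (B f p / B p p) p"
  have f'p: "B f' p = 0"
    using p by (auto simp: f'_def B_simps)
  define \<beta> where "\<beta> = B f' e"
  have "B p e = 0"
    using ep B_orthogonal_sym by blast
  then have "\<beta> \<noteq> 0"
    using \<open>B f e \<noteq> 0\<close> by (simp add: \<beta>_def f'_def B_simps)
  define r where "r = Re (B f' f')"
  define s where "s = 1 / (1 + \<bar>r\<bar>)"
  have s: "s > 0" "s * r > -1"
    using abs_ge_self[of "- r"] by (auto simp: s_def field_simps)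
  \<comment> \<open>moving e slightly towards f' produces a positive vector orthogonal to p\<close>
  define e' where "e' = e + csc J (complex_of_real s * cnj \<beta>) f'"
  have "B e' p = 0"
    by (simp add: e'_def B_simps ep f'p)
  moreover have "Re (B e' e') = s * (cmod \<beta>)\<^sup>2 * (2 + s * r)"
    unfolding e'_def \<beta>_def r_def using ee by (rule Re_B_isotropic_shift)
  moreover have "s * (cmod \<beta>)\<^sup>2 * (2 + s * r) > 0"
    using s \<open>\<beta> \<noteq> 0\<close> by (intro mult_pos_pos) auto
  ultimately show False
    using orthogonal_to_positive_not_positive[OF p] by fastforce
qed

lemma orthogonal_to_positive_negative:
  assumes "Re (B p p) > 0" and "B e p = 0" and "e \<noteq> 0"
  shows "Re (B e e) < 0"
proof -
  have "B e e \<noteq> 0"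
    using isotropic_orthogonal_to_positive_eq_0[OF assms(1,2)] assms(3) by blast
  then have "Re (B e e) \<noteq> 0"
    using B_self_real[of e] by (metis of_real_0)
  then show ?thesis
    using orthogonal_to_positive_not_positive[OF assms(1,2)] by linarith
qed

lemma reverse_Cauchy_Schwarz_strict:
  assumes p: "Re (B p p) > 0" and x: "x \<notin> cspan1 J p"
  shows "Re (B x x) * Re (B p p) < (cmod (B x p))\<^sup>2"
proof -
  define P where "P = Re (B p p)"
  have Bpp: "B p p = complex_of_real P"
    using B_self_real[of p] by (simp add: P_def)
  define t where "t = B x p / B p p"
  define e where "e = x - csc J t p"
  have ep: "B e p = 0"
    using p by (auto simp: e_def t_def B_simps)
  have "e \<noteq> 0"
    using x by (auto simp: e_def cspan1_iff)
  then have e: "Re (B e e) < 0"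
    using orthogonal_to_positive_negative[OF p ep] by blast
  have x_eq: "x = csc J t p + e"
    by (simp add: e_def)
  have "B (csc J t p) e = 0"
    using ep by (simp add: B_csc_left B_orthogonal_sym)
  then have "Re (B x x) = (cmod t)\<^sup>2 * P + Re (B e e)"
    by (simp add: x_eq B_orthogonal_sum_self Re_B_csc_self P_def)
  then have "Re (B x x) * Re (B p p) = (cmod t)\<^sup>2 * P\<^sup>2 + Re (B e e) * P"
    by (simp add: P_def power2_eq_square algebra_simps)
  also have "\<dots> < (cmod t)\<^sup>2 * P\<^sup>2"
    using mult_neg_pos[OF e p] by (simp add: P_def)
  also have "\<dots> = (cmod (B x p))\<^sup>2"
  proof -
    have "B x p = t * complex_of_real P"
      by (simp add: x_eq B_simps ep Bpp)
    then show ?thesis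
      using p by (simp add: norm_mult power_mult_distrib P_def)
  qed
  finally show ?thesis .
qed

lemma hdist_csc_left: "z \<noteq> 0 \<Longrightarrow> hdist B (csc J z x) y = hdist B x y"
  unfolding hdist_def Re_B_csc_self by (simp add: B_csc_left norm_mult real_sqrt_mult mult.assoc)

lemma hdist_commute: "hdist B x y = hdist B y x"
  unfolding hdist_def using B_cnj[of x y] by (simp add: mult.commute)

lemma hdist_csc_right: "z \<noteq> 0 \<Longrightarrow> hdist B x (csc J z y) = hdist B x y"
  using hdist_csc_left hdist_commute by metis

lemma hdist_eq_0_imp_cspan1:
  assumes p: "Re (B p p) > 0" and x: "Re (B x x) > 0" and "hdist B x p = 0"
  shows "x \<in> cspan1 J p"
proof (rule ccontr)
  assume "x \<notin> cspan1 J p"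
  then have lt: "sqrt (Re (B x x) * Re (B p p)) < cmod (B x p)"
    using reverse_Cauchy_Schwarz_strict[OF p] real_less_lsqrt by fastforce
  define A where "A = cmod (B x p) / sqrt (Re (B x x) * Re (B p p))"
  have "A > 1"
    using lt p x by (simp add: A_def)
  then have "arcosh A > 0"
    using arcosh_real_gt_1_iff[of A] by simp
  with \<open>hdist B x p = 0\<close> show False
    by (simp add: hdist_def A_def)
qed

end

lemma hyp_setting_imp_hyperbolic_form: "hyp_setting J B \<Longrightarrow> hyperbolic_form J B"
  by (simp add: hyp_setting_def hyperbolic_form_def hermitian_form_def
      hermitian_form_axioms_def hyperbolic_form_axioms_def complex_structure_space_def)

section \<open>The group SU(1,1)\<close>

definition inv_sqrt2 :: complex where
  "inv_sqrt2 = complex_of_real (1 / sqrt 2)"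

lemma inv_sqrt2_sq: "inv_sqrt2 * inv_sqrt2 = 1 / 2"
  by (simp add: inv_sqrt2_def flip: of_real_mult)

lemma inv_sqrt2_sq_mult: "inv_sqrt2 * (inv_sqrt2 * x) = x / 2"
  by (simp add: inv_sqrt2_sq flip: mult.assoc)

lemma xi1_nth [simp]: "xi1 $ i = inv_sqrt2"
  by (simp add: xi1_def inv_sqrt2_def)

lemma xi2_nth [simp]: "xi2 $ 1 = inv_sqrt2" "xi2 $ 2 = - inv_sqrt2"
  by (simp_all add: xi2_def inv_sqrt2_def)

text \<open>Coordinates with respect to the basis (xi1, xi2), and the matrix acting as
  (p q; r s) in that basis.\<close>
definition xi_coord1 :: "complex^2 \<Rightarrow> complex" where
  "xi_coord1 x = (x $ 1 + x $ 2) * inv_sqrt2"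

definition xi_coord2 :: "complex^2 \<Rightarrow> complex" where
  "xi_coord2 x = (x $ 1 - x $ 2) * inv_sqrt2"

definition xi_matrix :: "complex \<Rightarrow> complex \<Rightarrow> complex \<Rightarrow> complex \<Rightarrow> complex^2^2" where
  "xi_matrix p q r s = (\<chi> i j. (if i = 1 then (if j = 1 then p + q + r + s else p - q + r - s)
                                else (if j = 1 then p + q - r - s else p - q - r + s)) / 2)"

lemma xi_matrix_nth [simp]:
  "xi_matrix p q r s $ 1 $ 1 = (p + q + r + s) / 2"
  "xi_matrix p q r s $ 1 $ 2 = (p - q + r - s) / 2"
  "xi_matrix p q r s $ 2 $ 1 = (p + q - r - s) / 2"
  "xi_matrix p q r s $ 2 $ 2 = (p - q - r + s) / 2"
  by (simp_all add: xi_matrix_def)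

lemma matrix_vector_mult_2_nth:
  "((A::complex^2^2) *v x) $ 1 = A $ 1 $ 1 * x $ 1 + A $ 1 $ 2 * x $ 2"
  "((A::complex^2^2) *v x) $ 2 = A $ 2 $ 1 * x $ 1 + A $ 2 $ 2 * x $ 2"
  by (simp_all add: matrix_vector_mult_def sum_2)

lemma vec2_eq_iff: "(x::complex^2) = y \<longleftrightarrow> x $ 1 = y $ 1 \<and> x $ 2 = y $ 2"
  by (simp add: vec_eq_iff forall_2)

lemma mat2_eq_iff:
  "(A::complex^2^2) = C \<longleftrightarrow>
     A $ 1 $ 1 = C $ 1 $ 1 \<and> A $ 1 $ 2 = C $ 1 $ 2 \<and> A $ 2 $ 1 = C $ 2 $ 1 \<and> A $ 2 $ 2 = C $ 2 $ 2"
  by (auto simp add: vec_eq_iff forall_2)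

lemma xi_coord_add_scale:
  "xi_coord1 (a *s x + b *s y) = a * xi_coord1 x + b * xi_coord1 y"
  "xi_coord2 (a *s x + b *s y) = a * xi_coord2 x + b * xi_coord2 y"
  "xi_coord1 (a *s x) = a * xi_coord1 x"
  "xi_coord2 (a *s x) = a * xi_coord2 x"
  by (simp_all add: xi_coord1_def xi_coord2_def algebra_simps)

lemma xi_coord_xi [simp]:
  "xi_coord1 xi1 = 1" "xi_coord1 xi2 = 0" "xi_coord2 xi1 = 0" "xi_coord2 xi2 = 1"
  by (simp_all add: xi_coord1_def xi_coord2_def) (simp_all add: field_simps inv_sqrt2_sq_mult)

lemma xi_matrix_xi:
  "xi_matrix p q r s *v xi1 = p *s xi1 + r *s xi2"
  "xi_matrix p q r s *v xi2 = q *s xi1 + s *s xi2"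
  by (simp_all add: vec2_eq_iff matrix_vector_mult_2_nth) (simp_all add: field_simps inv_sqrt2_sq)

lemma xi_coord_xi_matrix:
  "xi_coord1 (xi_matrix p q r s *v x) = p * xi_coord1 x + q * xi_coord2 x"
  "xi_coord2 (xi_matrix p q r s *v x) = r * xi_coord1 x + s * xi_coord2 x"
  by (simp_all add: xi_coord1_def xi_coord2_def matrix_vector_mult_2_nth) (simp_all add: field_simps)

lemma B11_xi_coord: "B11 x y = xi_coord1 x * cnj (xi_coord2 y) + xi_coord2 x * cnj (xi_coord1 y)"
  unfolding B11_def xi_coord1_def xi_coord2_def
  by (simp add: inv_sqrt2_def field_simps flip: of_real_mult)

lemma xi_matrix_of_xi_coord:
  "(A::complex^2^2) = xi_matrix (xi_coord1 (A *v xi1)) (xi_coord1 (A *v xi2))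
                                (xi_coord2 (A *v xi1)) (xi_coord2 (A *v xi2))"
  by (simp add: mat2_eq_iff xi_coord1_def xi_coord2_def matrix_vector_mult_2_nth)
    (simp_all add: field_simps inv_sqrt2_sq inv_sqrt2_sq_mult)

lemma xi_matrix_mult:
  "xi_matrix p q r s ** xi_matrix p' q' r' s' =
     xi_matrix (p * p' + q * r') (p * q' + q * s') (r * p' + s * r') (r * q' + s * s')"
  by (simp add: mat2_eq_iff matrix_matrix_mult_def sum_2) (simp_all add: field_simps)

lemma det_xi_matrix: "det (xi_matrix p q r s) = p * s - q * r"
  by (simp add: det_2) (simp add: field_simps)

lemma xi_matrix_eq_iff:
  "xi_matrix p q r s = xi_matrix p' q' r' s' \<longleftrightarrow> p = p' \<and> q = q' \<and> r = r' \<and> s = s'"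
  by (metis xi_coord_xi_matrix xi_coord_xi mult_1_right mult_zero_right add_0 add_0_right)

lemma mat1_eq_xi_matrix: "mat 1 = xi_matrix 1 0 0 1"
  by (simp add: mat2_eq_iff mat_def)

lemma neg_mat1_eq_xi_matrix: "- mat 1 = xi_matrix (- 1) 0 0 (- 1)"
  by (simp add: mat2_eq_iff mat_def)

lemma gmat_eq_xi_matrix: "gmat l b = xi_matrix (complex_of_real l) (\<i> * complex_of_real b) 0 (complex_of_real (1 / l))"
  unfolding gmat_def
proof (rule the_equality)
  fix A :: "complex^2^2"
  assume "A *v xi1 = complex_of_real l *s xi1 \<and>
    A *v xi2 = (\<i> * complex_of_real b) *s xi1 + complex_of_real (1 / l) *s xi2"
  then show "A = xi_matrix (complex_of_real l) (\<i> * complex_of_real b) 0 (complex_of_real (1 / l))"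
    by (subst xi_matrix_of_xi_coord) (simp add: xi_coord_add_scale)
qed (simp add: xi_matrix_xi)

definition weyl :: "complex^2^2" where
  "weyl = xi_matrix 0 \<i> \<i> 0"

definition lower_unipotent :: "real \<Rightarrow> complex^2^2" where
  "lower_unipotent t = xi_matrix 1 0 (\<i> * complex_of_real t) 1"

lemma SU11_mult_closed: "g \<in> SU11 \<Longrightarrow> h \<in> SU11 \<Longrightarrow> g ** h \<in> SU11"
  by (simp add: SU11_def det_mul flip: matrix_vector_mul_assoc)

lemma xi_matrix_in_SU11_iff:
  "xi_matrix p q r s \<in> SU11 \<longleftrightarrow>
     p * s - q * r = 1 \<and> p * cnj r + r * cnj p = 0 \<and> q * cnj s + s * cnj q = 0 \<and>
     p * cnj s + r * cnj q = 1"
    (is "_ \<longleftrightarrow> ?det \<and> ?c11 \<and> ?c22 \<and> ?c12")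
proof
  assume "xi_matrix p q r s \<in> SU11"
  then have "det (xi_matrix p q r s) = 1"
    and B11: "\<And>z w. B11 (xi_matrix p q r s *v z) (xi_matrix p q r s *v w) = B11 z w"
    by (auto simp: SU11_def)
  moreover have ?c11 ?c22 ?c12
    using B11[of xi1 xi1] B11[of xi2 xi2] B11[of xi1 xi2] by (simp_all add: B11_xi_coord xi_coord_xi_matrix)
  ultimately show "?det \<and> ?c11 \<and> ?c22 \<and> ?c12"
    by (simp add: det_xi_matrix)
next
  assume h: "?det \<and> ?c11 \<and> ?c22 \<and> ?c12"
  then have "cnj (p * cnj s + r * cnj q) = 1"
    by simp
  then have c21: "q * cnj r + s * cnj p = 1"
    by (simp add: algebra_simps)
  have "B11 (xi_matrix p q r s *v z) (xi_matrix p q r s *v w) = B11 z w" for z w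
  proof -
    define \<alpha> \<beta> \<gamma> \<delta> where "\<alpha> = xi_coord1 z" "\<beta> = xi_coord2 z" "\<gamma> = xi_coord1 w" "\<delta> = xi_coord2 w"
    have "B11 (xi_matrix p q r s *v z) (xi_matrix p q r s *v w) =
        \<alpha> * cnj \<gamma> * (p * cnj r + r * cnj p) + \<alpha> * cnj \<delta> * (p * cnj s + r * cnj q)
        + \<beta> * cnj \<gamma> * (q * cnj r + s * cnj p) + \<beta> * cnj \<delta> * (q * cnj s + s * cnj q)"
      by (simp add: B11_xi_coord xi_coord_xi_matrix \<alpha>_\<beta>_\<gamma>_\<delta>_def algebra_simps)
    also have "\<dots> = B11 z w"
      using h c21 by (simp add: B11_xi_coord \<alpha>_\<beta>_\<gamma>_\<delta>_def)
    finally show ?thesis .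
  qed
  with h show "xi_matrix p q r s \<in> SU11"
    by (simp add: SU11_def det_xi_matrix)
qed

lemma gmat_in_SU11: "l \<noteq> 0 \<Longrightarrow> gmat l b \<in> SU11"
  by (simp add: gmat_eq_xi_matrix xi_matrix_in_SU11_iff)

lemma weyl_in_SU11: "weyl \<in> SU11"
  by (simp add: weyl_def xi_matrix_in_SU11_iff)

lemma lower_unipotent_in_SU11: "lower_unipotent t \<in> SU11"
  by (simp add: lower_unipotent_def xi_matrix_in_SU11_iff)

lemma mat1_in_SU11: "mat 1 \<in> SU11"
  by (simp add: mat1_eq_xi_matrix xi_matrix_in_SU11_iff)

lemma neg_mat1_in_SU11: "- mat 1 \<in> SU11"
  by (simp add: neg_mat1_eq_xi_matrix xi_matrix_in_SU11_iff)

lemma gmat_1_0: "gmat 1 0 = mat 1"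
  by (simp add: gmat_eq_xi_matrix mat1_eq_xi_matrix)

lemma gmat_1_eq_mat1_iff: "gmat 1 b = mat 1 \<longleftrightarrow> b = 0"
  by (simp add: gmat_eq_xi_matrix mat1_eq_xi_matrix xi_matrix_eq_iff)

lemma lower_unipotent_eq_mat1_iff: "lower_unipotent t = mat 1 \<longleftrightarrow> t = 0"
  by (simp add: lower_unipotent_def mat1_eq_xi_matrix xi_matrix_eq_iff)

lemma gmat_1_mult: "gmat 1 b ** gmat 1 b' = gmat 1 (b + b')"
  by (simp add: gmat_eq_xi_matrix xi_matrix_mult xi_matrix_eq_iff algebra_simps)

lemma gmat_diag_mult_inverse: "l \<noteq> 0 \<Longrightarrow> gmat l 0 ** gmat (1 / l) 0 = mat 1"
  by (simp add: gmat_eq_xi_matrix xi_matrix_mult mat1_eq_xi_matrix)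

lemma gmat_split: "l \<noteq> 0 \<Longrightarrow> gmat l b = gmat 1 (b * l) ** gmat l 0"
  by (simp add: gmat_eq_xi_matrix xi_matrix_mult xi_matrix_eq_iff)

lemma gmat_diag_mult_unipotent: "gmat l 0 ** gmat 1 b = gmat l (l * b)"
  by (simp add: gmat_eq_xi_matrix xi_matrix_mult xi_matrix_eq_iff)

lemma gmat_conj_unipotent: "l \<noteq> 0 \<Longrightarrow> (gmat l 0 ** gmat 1 b) ** gmat (1 / l) 0 = gmat 1 (l\<^sup>2 * b)"
  by (simp add: gmat_eq_xi_matrix xi_matrix_mult xi_matrix_eq_iff power2_eq_square)

lemma gmat_conj_lower_unipotent:
  "l \<noteq> 0 \<Longrightarrow> (gmat l 0 ** lower_unipotent t) ** gmat (1 / l) 0 = lower_unipotent (t / l\<^sup>2)"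
  by (simp add: gmat_eq_xi_matrix xi_matrix_mult lower_unipotent_def xi_matrix_eq_iff
      power2_eq_square field_simps)

lemma weyl_mult_gmat_diag: "l \<noteq> 0 \<Longrightarrow> weyl ** gmat l 0 = gmat (1 / l) 0 ** weyl"
  by (simp add: gmat_eq_xi_matrix xi_matrix_mult weyl_def xi_matrix_eq_iff)

lemma weyl_eq_unipotents: "weyl = gmat 1 1 ** (lower_unipotent 1 ** gmat 1 1)"
  by (simp add: gmat_eq_xi_matrix xi_matrix_mult weyl_def lower_unipotent_def xi_matrix_eq_iff)

lemma upper_triangular_SU11:
  assumes "xi_matrix p q 0 s \<in> SU11"
  shows "\<exists>l>0. \<exists>b. xi_matrix p q 0 s = gmat l b \<or> xi_matrix p q 0 s = (- mat 1) ** gmat l b"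
proof -
  from assms have ps: "p * s = 1" and "p * cnj s = 1" and q: "q * cnj s + s * cnj q = 0"
    by (auto simp: xi_matrix_in_SU11_iff)
  then have "s = cnj s"
    by (metis mult_left_cancel mult_zero_left zero_neq_one)
  then have "Im s = 0"
    by (metis cnj.sel(2) equal_neg_zero)
  define \<sigma> where "\<sigma> = Re s"
  have s: "s = complex_of_real \<sigma>"
    using \<open>Im s = 0\<close> by (simp add: complex_eq_iff \<sigma>_def)
  have "\<sigma> \<noteq> 0"
    using ps s by auto
  have p: "p = complex_of_real (1 / \<sigma>)"
    using ps s \<open>\<sigma> \<noteq> 0\<close> by (simp add: field_simps)
  have "complex_of_real \<sigma> * (q + cnj q) = 0"
    using q s by (simp add: algebra_simps)
  then have "Re q = 0"
    using \<open>\<sigma> \<noteq> 0\<close> complex_add_cnj[of q] by simp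
  then have q: "q = \<i> * complex_of_real (Im q)"
    by (simp add: complex_eq_iff)
  show ?thesis
  proof (cases "\<sigma> > 0")
    case True
    have "xi_matrix p q 0 s = gmat (1 / \<sigma>) (Im q)"
      by (simp add: gmat_eq_xi_matrix xi_matrix_eq_iff p s flip: q)
    then show ?thesis
      using True by (intro exI[of _ "1 / \<sigma>"]) auto
  next
    case False
    then have "\<sigma> < 0"
      using \<open>\<sigma> \<noteq> 0\<close> by simp
    have "xi_matrix p q 0 s = (- mat 1) ** gmat (- 1 / \<sigma>) (- Im q)"
      by (simp add: gmat_eq_xi_matrix neg_mat1_eq_xi_matrix xi_matrix_mult xi_matrix_eq_iff p s)
        (subst q, simp)
    then show ?thesis
      using \<open>\<sigma> < 0\<close> by (intro exI[of _ "- 1 / \<sigma>"]) (auto simp: field_simps)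
  qed
qed

text \<open>Via the Bruhat decomposition: every element is upper triangular or of the form
  g(1,t) * weyl * (upper triangular).\<close>
lemma SU11_induct [consumes 1, case_names mult neg_one diagonal unipotent weyl]:
  assumes g: "g \<in> SU11"
    and mult: "\<And>g h. g \<in> SU11 \<Longrightarrow> h \<in> SU11 \<Longrightarrow> P g \<Longrightarrow> P h \<Longrightarrow> P (g ** h)"
    and neg_one: "P (- mat 1)"
    and diagonal: "\<And>l. l > 0 \<Longrightarrow> P (gmat l 0)"
    and unipotent: "\<And>b. P (gmat 1 b)"
    and weyl: "P weyl"
  shows "P g"
proof -
  have gmat: "P (gmat l b)" if "l > 0" for l b
  proof -
    have "P (gmat 1 (b * l) ** gmat l 0)"
      using that by (intro mult gmat_in_SU11 unipotent diagonal) auto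
    then show ?thesis
      using gmat_split[of l b] that by simp
  qed
  have upper: "P (xi_matrix p q 0 s)" if u: "xi_matrix p q 0 s \<in> SU11" for p q s
  proof -
    obtain l b where "l > 0" and "xi_matrix p q 0 s = gmat l b \<or> xi_matrix p q 0 s = (- mat 1) ** gmat l b"
      using upper_triangular_SU11[OF u] by blast
    then show ?thesis
      using gmat[of l b] by (metis mult neg_one neg_mat1_in_SU11 gmat_in_SU11 less_irrefl)
  qed
  define p q r s where "p = xi_coord1 (g *v xi1)" "q = xi_coord1 (g *v xi2)"
    "r = xi_coord2 (g *v xi1)" "s = xi_coord2 (g *v xi2)"
  have g_eq: "g = xi_matrix p q r s"
    unfolding p_q_r_s_def by (rule xi_matrix_of_xi_coord)
  have pr: "p * cnj r + r * cnj p = 0"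
    using g g_eq by (simp add: xi_matrix_in_SU11_iff)
  show ?thesis
  proof (cases "r = 0")
    case True
    then show ?thesis
      using upper g g_eq by simp
  next
    case False
    \<comment> \<open>p/r is purely imaginary, so a unipotent g(1,t) brings g to weyl times an upper triangular matrix\<close>
    have "Re p * Re r + Im p * Im r = 0"
      using arg_cong[OF pr, of Re] by simp
    then have "Re (p / r) = 0"
      by (simp add: Re_divide')
    then obtain t where "\<i> * p / r = complex_of_real t"
      by (metis Im_i_times complex_is_Real_iff Reals_cases times_divide_eq_right)
    then have "- \<i> * (\<i> * p) = - \<i> * (complex_of_real t * r)"
      using False by (simp add: field_simps)
    then have p: "p = - \<i> * complex_of_real t * r"
      by (simp add: mult.assoc[symmetric])
    define u where "u = xi_matrix (- \<i> * r) (- \<i> * s) 0 (- \<i> * (q + \<i> * complex_of_real t * s))"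
    have "u = (- mat 1) ** (weyl ** (gmat 1 t ** g))"
      by (simp add: u_def g_eq gmat_eq_xi_matrix weyl_def neg_mat1_eq_xi_matrix xi_matrix_mult
          xi_matrix_eq_iff p algebra_simps)
    then have "u \<in> SU11"
      using g by (simp add: SU11_mult_closed neg_mat1_in_SU11 weyl_in_SU11 gmat_in_SU11)
    then have "P u"
      unfolding u_def by (rule upper)
    moreover have "g = gmat 1 (- t) ** (weyl ** u)"
      by (simp add: u_def g_eq gmat_eq_xi_matrix weyl_def xi_matrix_mult xi_matrix_eq_iff p algebra_simps)
    ultimately show ?thesis
      using \<open>u \<in> SU11\<close>
      by (simp add: mult unipotent weyl gmat_in_SU11 weyl_in_SU11 SU11_mult_closed)
  qed
qed

lemma LIMSEQ_divide_Suc_power: "n > 0 \<Longrightarrow> (\<lambda>k. c / real (Suc k) ^ n) \<longlonglongrightarrow> 0"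
proof -
  assume "n > 0"
  have "(\<lambda>k. c * inverse (real (Suc k)) ^ n) \<longlonglongrightarrow> c * 0 ^ n"
    by (intro tendsto_intros LIMSEQ_inverse_real_of_nat)
  with \<open>n > 0\<close> show ?thesis
    by (simp add: divide_inverse power_inverse zero_power del: of_nat_Suc)
qed

lemma tendsto_xi_matrix:
  assumes "(P \<longlongrightarrow> p) F" "(Q \<longlongrightarrow> q) F" "(R \<longlongrightarrow> r) F" "(S \<longlongrightarrow> s) F"
  shows "((\<lambda>x. xi_matrix (P x) (Q x) (R x) (S x)) \<longlongrightarrow> xi_matrix p q r s) F"
proof (intro vec_tendstoI)
  fix i j :: 2
  show "((\<lambda>x. xi_matrix (P x) (Q x) (R x) (S x) $ i $ j) \<longlongrightarrow> xi_matrix p q r s $ i $ j) F"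
    using exhaust_2[of i] exhaust_2[of j]
    by (elim disjE; simp; intro tendsto_intros assms; simp)
qed

lemma tendsto_gmat_1:
  assumes "(f \<longlongrightarrow> 0) F"
  shows "((\<lambda>x. gmat 1 (f x)) \<longlongrightarrow> mat 1) F"
proof -
  have "((\<lambda>x. xi_matrix 1 (\<i> * of_real (f x)) 0 1) \<longlongrightarrow> xi_matrix 1 (\<i> * of_real 0) 0 1) F"
    by (intro tendsto_xi_matrix tendsto_intros assms)
  then show ?thesis
    by (simp add: gmat_eq_xi_matrix mat1_eq_xi_matrix)
qed

lemma tendsto_lower_unipotent:
  assumes "(f \<longlongrightarrow> 0) F"
  shows "((\<lambda>x. lower_unipotent (f x)) \<longlongrightarrow> mat 1) F"
proof -
  have "((\<lambda>x. xi_matrix 1 0 (\<i> * of_real (f x)) 1) \<longlongrightarrow> xi_matrix 1 0 (\<i> * of_real 0) 1) F"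
    by (intro tendsto_xi_matrix tendsto_intros assms)
  then show ?thesis
    by (simp add: lower_unipotent_def mat1_eq_xi_matrix)
qed

section \<open>Projective representations\<close>

locale projective_rep = hyperbolic_form J B
  for J :: "'v::{real_inner,complete_space} \<Rightarrow> 'v" and B +
  fixes \<rho> :: "complex^2^2 \<Rightarrow> 'v \<Rightarrow> 'v"
  assumes representation: "representation J B \<rho>"
begin

lemma rho_unitary: "g \<in> SU11 \<Longrightarrow> unitary_B J B (\<rho> g)"
  using representation unfolding representation_def by blast

lemma linear_rho: "g \<in> SU11 \<Longrightarrow> linear (\<rho> g)"
  using rho_unitary unfolding unitary_B_def by (blast intro: bounded_linear.linear)

lemma rho_add: "g \<in> SU11 \<Longrightarrow> \<rho> g (v + w) = \<rho> g v + \<rho> g w"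
  using linear_rho linear_add by blast

lemma rho_csc: "g \<in> SU11 \<Longrightarrow> \<rho> g (csc J z v) = csc J z (\<rho> g v)"
  using linear_rho[of g] rho_unitary[of g]
  by (simp add: csc_def linear_add linear_scale unitary_B_def)

lemma rho_B: "g \<in> SU11 \<Longrightarrow> B (\<rho> g v) (\<rho> g w) = B v w"
  using rho_unitary unfolding unitary_B_def by blast

lemma bij_rho: "g \<in> SU11 \<Longrightarrow> bij (\<rho> g)"
  using rho_unitary unfolding unitary_B_def by blast

lemma rho_eq_0_iff: "g \<in> SU11 \<Longrightarrow> \<rho> g v = 0 \<longleftrightarrow> v = 0"
  using bij_rho[of g] linear_rho[of g] by (metis bij_is_inj injD linear_0)

lemma rho_mult:
  "g \<in> SU11 \<Longrightarrow> h \<in> SU11 \<Longrightarrow> \<exists>\<mu>. cmod \<mu> = 1 \<and> (\<forall>v. \<rho> (g ** h) v = csc J \<mu> (\<rho> g (\<rho> h v)))"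
  using representation unfolding representation_def by blast

lemma rho_neg_mat1: "\<exists>\<mu>. cmod \<mu> = 1 \<and> (\<forall>v. \<rho> (- mat 1) v = csc J \<mu> v)"
  using representation unfolding representation_def by blast

lemma rho_mat1: "\<exists>\<nu>. cmod \<nu> = 1 \<and> (\<forall>v. \<rho> (mat 1) v = csc J \<nu> v)"
proof -
  obtain \<mu> where \<mu>: "cmod \<mu> = 1" "\<And>v. \<rho> (mat 1) v = csc J \<mu> (\<rho> (mat 1) (\<rho> (mat 1) v))"
    using rho_mult[OF mat1_in_SU11 mat1_in_SU11] by auto
  have "\<rho> (mat 1) y = csc J (inverse \<mu>) y" for y
  proof -
    obtain v where v: "\<rho> (mat 1) v = y"
      using bij_rho[OF mat1_in_SU11] by (metis bij_def surjD)
    show ?thesis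
      using \<mu> v csc_eq_iff_inverse[of \<mu>] by force
  qed
  moreover have "cmod (inverse \<mu>) = 1"
    using \<mu>(1) by (simp add: norm_inverse)
  ultimately show ?thesis
    by blast
qed

lemma hdist_rho: "g \<in> SU11 \<Longrightarrow> hdist B (\<rho> g x) (\<rho> g y) = hdist B x y"
  by (simp add: hdist_def rho_B)

lemma cmod_eigenvalue_mult:
  assumes g: "g \<in> SU11" and h: "h \<in> SU11" and "x \<noteq> 0"
    and "\<rho> g x = csc J a x" and "\<rho> h x = csc J c x" and "\<rho> (g ** h) x = csc J d x"
  shows "cmod d = cmod a * cmod c"
proof -
  obtain \<mu> where "cmod \<mu> = 1" and \<mu>: "\<And>v. \<rho> (g ** h) v = csc J \<mu> (\<rho> g (\<rho> h v))"
    using rho_mult[OF g h] by blast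
  have "csc J d x = csc J (\<mu> * (c * a)) x"
    using assms \<mu>[of x] by (simp add: rho_csc csc_csc)
  then have "d = \<mu> * (c * a)"
    using csc_cancel_right \<open>x \<noteq> 0\<close> by blast
  with \<open>cmod \<mu> = 1\<close> show ?thesis
    by (simp add: norm_mult)
qed

definition stabilizer :: "'v set \<Rightarrow> (complex^2^2) set" where
  "stabilizer W = {g \<in> SU11. \<rho> g ` W \<subseteq> W}"

lemma stabilizer_cspan1_iff: "g \<in> stabilizer (cspan1 J p) \<longleftrightarrow> g \<in> SU11 \<and> \<rho> g p \<in> cspan1 J p"
proof
  have "p \<in> cspan1 J p"
    by (metis csc_one cspan1_iff)
  then show "g \<in> stabilizer (cspan1 J p) \<Longrightarrow> g \<in> SU11 \<and> \<rho> g p \<in> cspan1 J p"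
    by (auto simp: stabilizer_def)
next
  assume "g \<in> SU11 \<and> \<rho> g p \<in> cspan1 J p"
  then obtain w where g: "g \<in> SU11" and w: "\<rho> g p = csc J w p"
    by (auto simp: cspan1_iff)
  show "g \<in> stabilizer (cspan1 J p)"
    unfolding stabilizer_def
  proof (intro CollectI conjI image_subsetI)
    fix x
    assume "x \<in> cspan1 J p"
    then obtain z where "x = csc J z p"
      by (auto simp: cspan1_iff)
    then show "\<rho> g x \<in> cspan1 J p"
      using g w by (simp add: rho_csc csc_csc)
  qed (fact g)
qed

lemma stabilizer_mult:
  assumes "csc_closed J W" and "g \<in> stabilizer W" and "h \<in> stabilizer W"
  shows "g ** h \<in> stabilizer W"
proof -
  obtain \<mu> where \<mu>: "\<And>v. \<rho> (g ** h) v = csc J \<mu> (\<rho> g (\<rho> h v))"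
    using assms rho_mult[of g h] by (auto simp: stabilizer_def)
  show ?thesis
    using assms by (auto simp: stabilizer_def \<mu> csc_closed_def SU11_mult_closed image_subset_iff)
qed

lemma scalar_in_stabilizer:
  "csc_closed J W \<Longrightarrow> g \<in> SU11 \<Longrightarrow> (\<And>v. \<rho> g v = csc J \<mu> v) \<Longrightarrow> g \<in> stabilizer W"
  by (auto simp: stabilizer_def csc_closed_def)

lemma neg_mat1_in_stabilizer: "csc_closed J W \<Longrightarrow> - mat 1 \<in> stabilizer W"
  using rho_neg_mat1 neg_mat1_in_SU11 scalar_in_stabilizer by blast

lemma mat1_in_stabilizer: "csc_closed J W \<Longrightarrow> mat 1 \<in> stabilizer W"
  using rho_mat1 mat1_in_SU11 scalar_in_stabilizer by blast

lemma stabilizer_eq_SU11I: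
  assumes "csc_closed J W"
    and "\<And>l. l > 0 \<Longrightarrow> gmat l 0 \<in> stabilizer W"
    and "\<And>b. gmat 1 b \<in> stabilizer W"
    and "weyl \<in> stabilizer W"
  shows "stabilizer W = SU11"
proof -
  have "g \<in> stabilizer W" if "g \<in> SU11" for g
    using that
    by (induction rule: SU11_induct) (use assms stabilizer_mult neg_mat1_in_stabilizer in auto)
  then show ?thesis
    by (auto simp: stabilizer_def)
qed

text \<open>The distance from [rho(A k ** g ** A' k) p] to [p] is constantly d([rho g p], [p]) and
  tends to 0 by orbital continuity.\<close>
lemma stabilizer_conj_limit:
  assumes p: "Re (B p p) > 0" and g: "g \<in> SU11"
    and A: "\<And>k. A k \<in> stabilizer (cspan1 J p)" and A': "\<And>k. A' k \<in> stabilizer (cspan1 J p)"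
    and lim: "(\<lambda>k. (A k ** g) ** A' k) \<longlonglongrightarrow> mat 1"
    and ne: "\<And>k. (A k ** g) ** A' k \<noteq> mat 1"
  shows "g \<in> stabilizer (cspan1 J p)"
proof -
  define q where "q k = (A k ** g) ** A' k" for k
  have SU11: "A k \<in> SU11" "A' k \<in> SU11" "A k ** g \<in> SU11" "q k \<in> SU11" for k
    using A A' g by (auto simp: stabilizer_cspan1_iff q_def SU11_mult_closed)
  obtain \<nu> where "cmod \<nu> = 1" and \<nu>: "\<And>v. \<rho> (mat 1) v = csc J \<nu> v"
    using rho_mat1 by blast
  then have "\<nu> \<noteq> 0"
    by auto
  have p0: "p \<noteq> 0"
    using p by auto
  have const: "hdist B (\<rho> (q k) p) (\<rho> (mat 1) p) = hdist B (\<rho> g p) p" for k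
  proof -
    obtain a a' where a: "\<rho> (A k) p = csc J a p" and a': "\<rho> (A' k) p = csc J a' p"
      using A[of k] A'[of k] by (auto simp: stabilizer_cspan1_iff cspan1_iff)
    have "a \<noteq> 0" "a' \<noteq> 0"
      using a a' rho_eq_0_iff[OF SU11(1)] rho_eq_0_iff[OF SU11(2)] p0 by force+
    obtain \<mu>1 \<mu>2 where "cmod \<mu>1 = 1" "cmod \<mu>2 = 1"
      and \<mu>1: "\<And>v. \<rho> (q k) v = csc J \<mu>1 (\<rho> (A k ** g) (\<rho> (A' k) v))"
      and \<mu>2: "\<And>v. \<rho> (A k ** g) v = csc J \<mu>2 (\<rho> (A k) (\<rho> g v))"
      using rho_mult[OF SU11(3,2)] rho_mult[OF SU11(1) g] unfolding q_def by metis
    have "\<rho> (q k) p = csc J (\<mu>1 * (a' * \<mu>2)) (\<rho> (A k) (\<rho> g p))"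
      by (simp add: \<mu>1 \<mu>2 a' rho_csc[OF SU11(3)] csc_csc)
    moreover have "\<mu>1 * (a' * \<mu>2) \<noteq> 0"
      using \<open>cmod \<mu>1 = 1\<close> \<open>cmod \<mu>2 = 1\<close> \<open>a' \<noteq> 0\<close> by auto
    ultimately have "hdist B (\<rho> (q k) p) (\<rho> (mat 1) p) = hdist B (\<rho> (A k) (\<rho> g p)) p"
      using \<open>\<nu> \<noteq> 0\<close> by (simp add: \<nu> hdist_csc_left hdist_csc_right)
    also have "\<dots> = hdist B (\<rho> (A k) (\<rho> g p)) (csc J a p)"
      using \<open>a \<noteq> 0\<close> by (simp add: hdist_csc_right)
    also have "\<dots> = hdist B (\<rho> g p) p"
      by (simp only: a[symmetric] hdist_rho[OF SU11(1)])
    finally show ?thesis .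
  qed
  have "((\<lambda>h. hdist B (\<rho> h p) (\<rho> (mat 1) p)) \<longlongrightarrow> 0) (at (mat 1) within SU11)"
    using representation p mat1_in_SU11 unfolding representation_def by blast
  moreover have "filterlim q (at (mat 1) within SU11) sequentially"
    using SU11(4) ne lim unfolding q_def by (simp add: filterlim_at)
  ultimately have "(\<lambda>k. hdist B (\<rho> (q k) p) (\<rho> (mat 1) p)) \<longlonglongrightarrow> 0"
    by (rule filterlim_compose)
  then have "hdist B (\<rho> g p) p = 0"
    by (simp add: const LIMSEQ_const_iff)
  moreover have "Re (B (\<rho> g p) (\<rho> g p)) > 0"
    using g p by (simp add: rho_B)
  ultimately show ?thesis
    using hdist_eq_0_imp_cspan1[OF p] g by (simp add: stabilizer_cspan1_iff)
qed


text \<open>A Mautner-type phenomenon: by orbital continuity, a positive point fixed by the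
  diagonal subgroup is fixed by the unipotent subgroups it contracts, hence by everything.\<close>
lemma diagonal_fixed_point_fixed:
  assumes p: "Re (B p p) > 0" and diag: "\<And>l. l > 0 \<Longrightarrow> gmat l 0 \<in> stabilizer (cspan1 J p)"
  shows "stabilizer (cspan1 J p) = SU11"
proof -
  have diag_inverse: "gmat l 0 \<in> stabilizer (cspan1 J p)" "gmat (1 / l) 0 \<in> stabilizer (cspan1 J p)"
    if "l > 0" for l
    using that diag by simp_all
  have unipotent: "gmat 1 b \<in> stabilizer (cspan1 J p)" for b
  proof (cases "b = 0")
    case True
    then show ?thesis
      using mat1_in_stabilizer[OF csc_closed_cspan1] by (simp add: gmat_1_0)
  next
    case False
    define l where "l k = 1 / real (Suc k)" for k
    have l: "l k > 0" for k
      by (simp add: l_def)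
    have conj: "(gmat (l k) 0 ** gmat 1 b) ** gmat (1 / l k) 0 = gmat 1 (b / real (Suc k) ^ 2)" for k
      using gmat_conj_unipotent[of "l k" b] l[of k] by (simp add: l_def power_divide)
    show ?thesis
    proof (rule stabilizer_conj_limit[OF p gmat_in_SU11 diag_inverse(1)[OF l] diag_inverse(2)[OF l]])
      show "(\<lambda>k. (gmat (l k) 0 ** gmat 1 b) ** gmat (1 / l k) 0) \<longlonglongrightarrow> mat 1"
        unfolding conj by (intro tendsto_gmat_1 LIMSEQ_divide_Suc_power) simp
      show "(gmat (l k) 0 ** gmat 1 b) ** gmat (1 / l k) 0 \<noteq> mat 1" for k
        unfolding conj using False by (simp add: gmat_1_eq_mat1_iff)
    qed simp
  qed
  have "lower_unipotent 1 \<in> stabilizer (cspan1 J p)"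
  proof -
    define l where "l k = real (Suc k)" for k
    have l: "l k > 0" for k
      by (simp add: l_def)
    have conj: "(gmat (l k) 0 ** lower_unipotent 1) ** gmat (1 / l k) 0
        = lower_unipotent (1 / real (Suc k) ^ 2)" for k
      using gmat_conj_lower_unipotent[of "l k" 1] l[of k] by (simp add: l_def)
    show ?thesis
    proof (rule stabilizer_conj_limit[OF p lower_unipotent_in_SU11 diag_inverse(1)[OF l] diag_inverse(2)[OF l]])
      show "(\<lambda>k. (gmat (l k) 0 ** lower_unipotent 1) ** gmat (1 / l k) 0) \<longlonglongrightarrow> mat 1"
        unfolding conj by (intro tendsto_lower_unipotent LIMSEQ_divide_Suc_power) simp
      show "(gmat (l k) 0 ** lower_unipotent 1) ** gmat (1 / l k) 0 \<noteq> mat 1" for k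
        unfolding conj by (simp add: lower_unipotent_eq_mat1_iff)
    qed
  qed
  then have "weyl \<in> stabilizer (cspan1 J p)"
    unfolding weyl_eq_unipotents by (intro stabilizer_mult csc_closed_cspan1 unipotent)
  then show ?thesis
    using diag unipotent by (intro stabilizer_eq_SU11I csc_closed_cspan1)
qed

lemma rho_weyl_eigenvector:
  assumes "l > 0" and "\<rho> (gmat (1 / l) 0) x = csc J c x"
  shows "\<exists>\<gamma>. \<rho> (gmat l 0) (\<rho> weyl x) = csc J \<gamma> (\<rho> weyl x)"
proof -
  have SU11: "gmat (1 / l) 0 \<in> SU11" "gmat l 0 \<in> SU11"
    using assms(1) by (simp_all add: gmat_in_SU11)
  obtain \<mu> where \<mu>: "\<And>v. \<rho> (weyl ** gmat (1 / l) 0) v = csc J \<mu> (\<rho> weyl (\<rho> (gmat (1 / l) 0) v))"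
    using rho_mult[OF weyl_in_SU11 SU11(1)] by blast
  obtain \<mu>' where "cmod \<mu>' = 1"
    and \<mu>': "\<And>v. \<rho> (gmat l 0 ** weyl) v = csc J \<mu>' (\<rho> (gmat l 0) (\<rho> weyl v))"
    using rho_mult[OF SU11(2) weyl_in_SU11] by blast
  have "weyl ** gmat (1 / l) 0 = gmat l 0 ** weyl"
    using weyl_mult_gmat_diag[of "1 / l"] assms(1) by simp
  then have "csc J \<mu>' (\<rho> (gmat l 0) (\<rho> weyl x)) = csc J (\<mu> * c) (\<rho> weyl x)"
    using \<mu>[of x] \<mu>'[of x] assms(2) by (simp add: rho_csc[OF weyl_in_SU11] csc_csc)
  moreover have "\<mu>' \<noteq> 0"
    using \<open>cmod \<mu>' = 1\<close> by auto
  ultimately have "\<rho> (gmat l 0) (\<rho> weyl x) = csc J (inverse \<mu>' * (\<mu> * c)) (\<rho> weyl x)"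
    by (simp add: csc_eq_iff_inverse csc_csc)
  then show ?thesis
    by blast
qed

end

section \<open>Null frames and irreducible representations\<close>

locale null_frame = hyperbolic_form J B
  for J :: "'v::{real_inner,complete_space} \<Rightarrow> 'v" and B +
  fixes \<eta>1 \<eta>2 :: 'v
  assumes eta1_isotropic: "B \<eta>1 \<eta>1 = 0"
    and eta2_isotropic: "B \<eta>2 \<eta>2 = 0"
    and eta12: "B \<eta>1 \<eta>2 = 1"
begin

lemma eta21: "B \<eta>2 \<eta>1 = 1"
  using B_cnj[of \<eta>2 \<eta>1] eta12 by simp

lemma eta1_neq_0: "\<eta>1 \<noteq> 0"
  using eta12 by auto

lemmas eta_B = eta1_isotropic eta2_isotropic eta12 eta21

definition frame_span :: "'v set" where
  "frame_span = {csc J x \<eta>1 + csc J y \<eta>2 | x y. True}"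

definition base_point :: 'v where
  "base_point = \<eta>1 + \<eta>2"

lemma B_frame_combination:
  "B (csc J a1 \<eta>1 + csc J b1 \<eta>2) (csc J a2 \<eta>1 + csc J b2 \<eta>2) = a1 * cnj b2 + b1 * cnj a2"
  by (simp add: B_simps eta_B)

lemma frame_spanI: "csc J x \<eta>1 + csc J y \<eta>2 \<in> frame_span"
  unfolding frame_span_def by blast

lemma mem_frame_span_iff: "v \<in> frame_span \<longleftrightarrow> v = csc J (B v \<eta>2) \<eta>1 + csc J (B v \<eta>1) \<eta>2"
proof
  assume "v \<in> frame_span"
  then obtain x y where "v = csc J x \<eta>1 + csc J y \<eta>2"
    unfolding frame_span_def by blast
  moreover have "B (csc J x \<eta>1 + csc J y \<eta>2) \<eta>2 = x" "B (csc J x \<eta>1 + csc J y \<eta>2) \<eta>1 = y"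
    by (simp_all add: B_simps eta_B)
  ultimately show "v = csc J (B v \<eta>2) \<eta>1 + csc J (B v \<eta>1) \<eta>2"
    by simp
qed (metis frame_spanI)

lemma frame_span_add:
  assumes "v \<in> frame_span" and "w \<in> frame_span"
  shows "v + w \<in> frame_span"
proof -
  obtain x y x' y' where "v = csc J x \<eta>1 + csc J y \<eta>2" and "w = csc J x' \<eta>1 + csc J y' \<eta>2"
    using assms unfolding frame_span_def by blast
  then have "v + w = csc J (x + x') \<eta>1 + csc J (y + y') \<eta>2"
    by (simp add: csc_add_scalar algebra_simps)
  then show ?thesis
    by (simp add: frame_spanI)
qed

lemma csc_closed_frame_span: "csc_closed J frame_span"
  unfolding csc_closed_def frame_span_def by (auto simp: csc_add_vector csc_csc) blast

lemma cspan1_eta_subset_frame_span: "cspan1 J \<eta>1 \<subseteq> frame_span" "cspan1 J \<eta>2 \<subseteq> frame_span"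
  using frame_spanI[of _ 0] frame_spanI[of 0] by (auto simp: cspan1_iff)

lemma eta_in_frame_span: "\<eta>1 \<in> frame_span" "\<eta>2 \<in> frame_span"
  using cspan1_eta_subset_frame_span by (metis csc_in_cspan1 csc_one subsetD)+

lemma base_point_in_frame_span: "base_point \<in> frame_span"
  using frame_spanI[of 1 1] by (simp add: base_point_def)

lemma Re_B_base_point: "Re (B base_point base_point) > 0"
  by (simp add: base_point_def B_simps eta_B)

lemma closed_frame_span: "closed frame_span"
proof -
  have "continuous_on UNIV (\<lambda>v. csc J (B v w) u)" for w u
    unfolding csc_def
    by (intro continuous_intros continuous_on_compose2[OF continuous_on_Re continuous_on_B_left]
        continuous_on_compose2[OF continuous_on_Im continuous_on_B_left]) auto
  then have "closed {v. v = csc J (B v \<eta>2) \<eta>1 + csc J (B v \<eta>1) \<eta>2}"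
    by (intro closed_Collect_eq continuous_on_id continuous_on_add)
  moreover have "frame_span = {v. v = csc J (B v \<eta>2) \<eta>1 + csc J (B v \<eta>1) \<eta>2}"
    using mem_frame_span_iff by blast
  ultimately show ?thesis
    by simp
qed

lemma complex_subspace_frame_span: "complex_subspace J frame_span"
  unfolding complex_subspace_def subspace_def
proof (intro conjI ballI allI)
  show "0 \<in> frame_span"
    using frame_spanI[of 0 0] by simp
  show "c *\<^sub>R x \<in> frame_span" if "x \<in> frame_span" for c x
    using that csc_closed_frame_span unfolding csc_closed_def by (metis csc_of_real)
  show "J ` frame_span \<subseteq> frame_span"
    using csc_closed_frame_span unfolding csc_closed_def by (metis csc_imaginary_unit image_subsetI)
qed (fact frame_span_add)

lemma frame_gram_determinant:
  assumes "u1 = csc J a1 \<eta>1 + csc J b1 \<eta>2" and "u2 = csc J a2 \<eta>1 + csc J b2 \<eta>2"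
  shows "B u1 u1 * B u2 u2 - B u1 u2 * B u2 u1 = - complex_of_real ((cmod (a1 * b2 - a2 * b1))\<^sup>2)"
  unfolding assms B_frame_combination complex_norm_square by (simp add: algebra_simps)

lemma frame_span_neq_UNIV: "frame_span \<noteq> UNIV"
proof
  assume U: "frame_span = UNIV"
  obtain u :: "nat \<Rightarrow> 'v" where u: "\<forall>i<2. \<forall>j<2. B (u i) (u j) = (if i = j then -1 else 0)"
    using signature unfolding signature_1_inf_def by blast
  have "u i = csc J (B (u i) \<eta>2) \<eta>1 + csc J (B (u i) \<eta>1) \<eta>2" for i
    using U mem_frame_span_iff by blast
  from frame_gram_determinant[OF this this]
  obtain d where "B (u 0) (u 0) * B (u 1) (u 1) - B (u 0) (u 1) * B (u 1) (u 0) = - complex_of_real d"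
    and "d \<ge> 0"
    by (metis zero_le_power2)
  moreover have "B (u 0) (u 0) * B (u 1) (u 1) - B (u 0) (u 1) * B (u 1) (u 0) = 1"
    using u by simp
  ultimately have "complex_of_real d = - 1"
    by (metis minus_minus)
  then have "d = - 1"
    by (metis of_real_1 of_real_minus of_real_eq_iff)
  with \<open>d \<ge> 0\<close> show False
    by simp
qed

lemma frame_orthogonal_negative:
  assumes "B e \<eta>1 = 0" and "B e \<eta>2 = 0" and "e \<noteq> 0"
  shows "Re (B e e) < 0"
  using orthogonal_to_positive_negative[OF Re_B_base_point] assms
  by (simp add: base_point_def B_add_right)

lemma frame_decomposition:
  obtains e where "u = csc J (B u \<eta>2) \<eta>1 + csc J (B u \<eta>1) \<eta>2 + e" and "B e \<eta>1 = 0" and "B e \<eta>2 = 0"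
proof
  let ?e = "u - csc J (B u \<eta>2) \<eta>1 - csc J (B u \<eta>1) \<eta>2"
  show "u = csc J (B u \<eta>2) \<eta>1 + csc J (B u \<eta>1) \<eta>2 + ?e" "B ?e \<eta>1 = 0" "B ?e \<eta>2 = 0"
    by (simp_all add: B_simps eta_B)
qed

lemma isotropic_orthogonal_eta_in_frame_span:
  assumes "B u u = 0" and "B u \<eta>1 = 0 \<or> B u \<eta>2 = 0"
  shows "u \<in> frame_span"
proof -
  obtain e where u: "u = csc J (B u \<eta>2) \<eta>1 + csc J (B u \<eta>1) \<eta>2 + e" and e: "B e \<eta>1 = 0" "B e \<eta>2 = 0"
    by (rule frame_decomposition)
  have "B (csc J (B u \<eta>2) \<eta>1 + csc J (B u \<eta>1) \<eta>2) e = 0"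
    using e by (simp add: B_simps B_orthogonal_sym)
  then have "B u u = B e e"
    using assms(2) by (subst (1 2) u) (auto simp: B_orthogonal_sum_self B_frame_combination)
  then have "e = 0"
    using frame_orthogonal_negative[OF e] assms(1) by fastforce
  then show ?thesis
    using u frame_spanI by (metis add_0_right)
qed

end

locale frame_rep = projective_rep J B \<rho> + null_frame J B \<eta>1 \<eta>2
  for J :: "'v::{real_inner,complete_space} \<Rightarrow> 'v" and B \<rho> \<eta>1 \<eta>2
begin

lemma frame_stabilizerI:
  assumes "g \<in> SU11" and "\<rho> g \<eta>1 \<in> frame_span" and "\<rho> g \<eta>2 \<in> frame_span"
  shows "g \<in> stabilizer frame_span"
  unfolding stabilizer_def
proof (intro CollectI conjI image_subsetI)
  fix v
  assume "v \<in> frame_span"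
  then obtain x y where "v = csc J x \<eta>1 + csc J y \<eta>2"
    unfolding frame_span_def by blast
  then have "\<rho> g v = csc J x (\<rho> g \<eta>1) + csc J y (\<rho> g \<eta>2)"
    using assms(1) by (simp add: rho_add rho_csc)
  then show "\<rho> g v \<in> frame_span"
    using assms(2,3) csc_closed_frame_span by (simp add: csc_closed_def frame_span_add)
qed (fact assms(1))

lemma rho_frame_span_surj:
  assumes g: "g \<in> stabilizer frame_span" and y: "y \<in> frame_span"
  shows "\<exists>v\<in>frame_span. \<rho> g v = y"
proof -
  have "g \<in> SU11" and "\<rho> g \<eta>1 \<in> frame_span" "\<rho> g \<eta>2 \<in> frame_span"
    using g eta_in_frame_span by (auto simp: stabilizer_def)
  then obtain a1 b1 a2 b2
    where T1: "\<rho> g \<eta>1 = csc J a1 \<eta>1 + csc J b1 \<eta>2" and T2: "\<rho> g \<eta>2 = csc J a2 \<eta>1 + csc J b2 \<eta>2"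
    unfolding mem_frame_span_iff by blast
  define d where "d = a1 * b2 - a2 * b1"
  \<comment> \<open>rho g preserves the Gram determinant of (eta1, eta2), which is -1\<close>
  have "- complex_of_real ((cmod d)\<^sup>2) = - 1"
    using frame_gram_determinant[OF T1 T2] \<open>g \<in> SU11\<close> by (simp add: rho_B eta_B d_def)
  then have "d \<noteq> 0"
    by auto
  obtain x z where y: "y = csc J x \<eta>1 + csc J z \<eta>2"
    using y unfolding frame_span_def by blast
  \<comment> \<open>Cramer's rule\<close>
  define c1 c2 where "c1 = (b2 * x - a2 * z) / d" "c2 = (a1 * z - b1 * x) / d"
  have "\<rho> g (csc J c1 \<eta>1 + csc J c2 \<eta>2) = csc J (c1 * a1 + c2 * a2) \<eta>1 + csc J (c1 * b1 + c2 * b2) \<eta>2"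
    using \<open>g \<in> SU11\<close> by (simp add: rho_add rho_csc T1 T2 csc_add_vector csc_csc csc_add_scalar algebra_simps)
  also have "c1 * a1 + c2 * a2 = x"
  proof -
    have "(b2 * x - a2 * z) * a1 + (a1 * z - b1 * x) * a2 = d * x"
      by (simp add: d_def algebra_simps)
    with \<open>d \<noteq> 0\<close> show ?thesis
      by (simp add: c1_c2_def field_simps)
  qed
  also have "c1 * b1 + c2 * b2 = z"
  proof -
    have "(b2 * x - a2 * z) * b1 + (a1 * z - b1 * x) * b2 = d * z"
      by (simp add: d_def algebra_simps)
    with \<open>d \<noteq> 0\<close> show ?thesis
      by (simp add: c1_c2_def field_simps)
  qed
  finally show ?thesis
    using y frame_spanI by blast
qed

lemma frame_stabilizer_inverse:
  assumes g: "g \<in> SU11" and h: "h \<in> stabilizer frame_span" and gh: "g ** h = mat 1"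
  shows "g \<in> stabilizer frame_span"
proof -
  have "h \<in> SU11"
    using h by (simp add: stabilizer_def)
  obtain \<mu> where "cmod \<mu> = 1" and \<mu>: "\<And>v. \<rho> (g ** h) v = csc J \<mu> (\<rho> g (\<rho> h v))"
    using rho_mult[OF g \<open>h \<in> SU11\<close>] by blast
  obtain \<nu> where \<nu>: "\<And>v. \<rho> (mat 1) v = csc J \<nu> v"
    using rho_mat1 by blast
  have "\<mu> \<noteq> 0"
    using \<open>cmod \<mu> = 1\<close> by auto
  have "\<rho> g y \<in> frame_span" if y: "y \<in> frame_span" for y
  proof -
    obtain v where "v \<in> frame_span" and "\<rho> h v = y"
      using rho_frame_span_surj[OF h y] by blast
    moreover have "csc J \<mu> (\<rho> g (\<rho> h v)) = csc J \<nu> v"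
      using \<mu>[of v] \<nu>[of v] gh by simp
    ultimately have "\<rho> g y = csc J (inverse \<mu> * \<nu>) v"
      using \<open>\<mu> \<noteq> 0\<close> by (simp add: csc_eq_iff_inverse csc_csc)
    with \<open>v \<in> frame_span\<close> show ?thesis
      using csc_closed_frame_span by (simp add: csc_closed_def)
  qed
  with g show ?thesis
    by (auto simp: stabilizer_def)
qed

lemma Kfun_characterization:
  assumes "cmod \<mu> = 1" and \<mu>: "csc J \<mu> (\<rho> (gmat 1 b) \<eta>1) = \<eta>1"
  obtains c where "csc J \<mu> (\<rho> (gmat 1 b) \<eta>2) = csc J (Kfun J B \<rho> \<eta>1 \<eta>2 b) \<eta>1 + \<eta>2 + c"
    and "B c \<eta>1 = 0" and "B c \<eta>2 = 0"
proof -
  have SU11: "gmat 1 b \<in> SU11"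
    by (simp add: gmat_in_SU11)
  define T2 where "T2 = csc J \<mu> (\<rho> (gmat 1 b) \<eta>2)"
  define K where "K = B T2 \<eta>2"
  define c where "c = T2 - csc J K \<eta>1 - \<eta>2"
  have "\<mu> * cnj \<mu> = 1"
    using \<open>cmod \<mu> = 1\<close> by (simp flip: complex_norm_square)
  have "B T2 \<eta>1 = B (csc J \<mu> (\<rho> (gmat 1 b) \<eta>2)) (csc J \<mu> (\<rho> (gmat 1 b) \<eta>1))"
    unfolding T2_def using \<mu> by simp
  also have "\<dots> = \<mu> * cnj \<mu> * B (\<rho> (gmat 1 b) \<eta>2) (\<rho> (gmat 1 b) \<eta>1)"
    by (simp add: B_csc_left B_csc_right mult_ac)
  also have "\<dots> = 1"
    using \<open>\<mu> * cnj \<mu> = 1\<close> by (simp add: rho_B[OF SU11] eta21)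
  finally have "B T2 \<eta>1 = 1" .
  then have c: "B c \<eta>1 = 0" "B c \<eta>2 = 0"
    by (simp_all add: c_def K_def B_simps eta_B)
  have T2_eq: "T2 = csc J K \<eta>1 + \<eta>2 + c"
    by (simp add: c_def)
  have "Kfun J B \<rho> \<eta>1 \<eta>2 b = K"
    unfolding Kfun_def
  proof (rule the_equality)
    show "\<exists>\<mu> c. cmod \<mu> = 1 \<and> csc J \<mu> (\<rho> (gmat 1 b) \<eta>1) = \<eta>1 \<and> B c \<eta>1 = 0 \<and> B c \<eta>2 = 0 \<and>
        csc J \<mu> (\<rho> (gmat 1 b) \<eta>2) = csc J K \<eta>1 + \<eta>2 + c"
      using \<open>cmod \<mu> = 1\<close> \<mu> c T2_eq unfolding T2_def by blast
  next
    fix k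
    assume "\<exists>\<mu>' c'. cmod \<mu>' = 1 \<and> csc J \<mu>' (\<rho> (gmat 1 b) \<eta>1) = \<eta>1 \<and> B c' \<eta>1 = 0 \<and> B c' \<eta>2 = 0 \<and>
        csc J \<mu>' (\<rho> (gmat 1 b) \<eta>2) = csc J k \<eta>1 + \<eta>2 + c'"
    then obtain \<mu>' c' where \<mu>': "csc J \<mu>' (\<rho> (gmat 1 b) \<eta>1) = \<eta>1" and "B c' \<eta>2 = 0"
      and T2': "csc J \<mu>' (\<rho> (gmat 1 b) \<eta>2) = csc J k \<eta>1 + \<eta>2 + c'"
      by blast
    \<comment> \<open>the normalisation fixing eta1 determines the lift\<close>
    have "\<mu>' = \<mu>"
      using \<mu> \<mu>' csc_cancel_right rho_eq_0_iff[OF SU11] eta1_neq_0 by metis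
    then have "K = B (csc J k \<eta>1 + \<eta>2 + c') \<eta>2"
      using T2' by (simp add: K_def T2_def)
    with \<open>B c' \<eta>2 = 0\<close> show "k = K"
      by (simp add: B_simps eta_B)
  qed
  then show ?thesis
    using that c T2_eq unfolding T2_def by blast
qed


end

locale irreducible_frame_rep = frame_rep J B \<rho> \<eta>1 \<eta>2
  for J :: "'v::{real_inner,complete_space} \<Rightarrow> 'v" and B \<rho> \<eta>1 \<eta>2 +
  assumes irreducible: "irreducible J B \<rho>"
    and eta1_fixed: "\<forall>l>0. \<forall>b. \<rho> (gmat l b) \<eta>1 \<in> cspan1 J \<eta>1"
    and eta2_fixed: "\<forall>l>0. \<rho> (gmat l 0) \<eta>2 \<in> cspan1 J \<eta>2"
begin

lemma positive_point_not_fixed: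
  assumes p: "Re (B p p) > 0"
  shows "stabilizer (cspan1 J p) \<noteq> SU11"
proof
  assume "stabilizer (cspan1 J p) = SU11"
  then have "\<forall>g\<in>SU11. \<rho> g p \<in> cspan1 J p"
    using stabilizer_cspan1_iff by blast
  moreover have "p \<noteq> 0" "Re (B p p) \<ge> 0"
    using p by auto
  moreover have "\<not> (\<exists>v. v \<noteq> 0 \<and> Re (B v v) \<ge> 0 \<and> (\<forall>g\<in>SU11. \<rho> g v \<in> cspan1 J v))"
    using irreducible unfolding irreducible_def by (rule conjunct1)
  ultimately show False
    by blast
qed

lemma frame_stabilizer_neq_SU11: "stabilizer frame_span \<noteq> SU11"
proof
  assume "stabilizer frame_span = SU11"
  then have "\<forall>g\<in>SU11. \<rho> g ` frame_span \<subseteq> frame_span"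
    by (auto simp: stabilizer_def)
  moreover have "\<not> (\<exists>W. complex_subspace J W \<and> closed W \<and> W \<noteq> UNIV \<and> (\<exists>v\<in>W. Re (B v v) > 0) \<and>
      (\<forall>g\<in>SU11. \<rho> g ` W \<subseteq> W))"
    using irreducible unfolding irreducible_def by (rule conjunct2[THEN conjunct2])
  ultimately show False
    using complex_subspace_frame_span closed_frame_span frame_span_neq_UNIV
      base_point_in_frame_span Re_B_base_point by blast
qed

lemma gmat_diag_eigenvalues:
  assumes "l > 0"
  obtains \<alpha> \<beta> where "\<rho> (gmat l 0) \<eta>1 = csc J \<alpha> \<eta>1" and "\<rho> (gmat l 0) \<eta>2 = csc J \<beta> \<eta>2"
    and "\<alpha> * cnj \<beta> = 1"
proof -
  have "\<rho> (gmat l 0) \<eta>1 \<in> cspan1 J \<eta>1" "\<rho> (gmat l 0) \<eta>2 \<in> cspan1 J \<eta>2"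
    using assms eta1_fixed eta2_fixed by auto
  then obtain \<alpha> \<beta> where \<alpha>: "\<rho> (gmat l 0) \<eta>1 = csc J \<alpha> \<eta>1" and \<beta>: "\<rho> (gmat l 0) \<eta>2 = csc J \<beta> \<eta>2"
    by (meson cspan1_iff)
  have "\<alpha> * cnj \<beta> = 1"
    using rho_B[OF gmat_in_SU11, of l 0 \<eta>1 \<eta>2] assms by (simp add: \<alpha> \<beta> B_simps eta12 mult.commute)
  with \<alpha> \<beta> show ?thesis
    by (rule that)
qed

lemma gmat_diag_in_frame_stabilizer: "l > 0 \<Longrightarrow> gmat l 0 \<in> stabilizer frame_span"
  by (rule frame_stabilizerI) (use gmat_in_SU11 eta1_fixed eta2_fixed cspan1_eta_subset_frame_span in auto)

text \<open>Otherwise every g(l,0), and hence every element, would fix the point [eta1 + eta2].\<close>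
lemma exists_loxodromic:
  obtains l \<alpha> where "l > 0" and "\<rho> (gmat l 0) \<eta>1 = csc J \<alpha> \<eta>1" and "cmod \<alpha> \<noteq> 1"
proof (rule ccontr)
  assume "\<not> thesis"
  with that have unimodular: "cmod \<alpha> = 1" if "l > 0" "\<rho> (gmat l 0) \<eta>1 = csc J \<alpha> \<eta>1" for l \<alpha>
    using that by blast
  have "gmat l 0 \<in> stabilizer (cspan1 J base_point)" if l: "l > 0" for l
  proof -
    obtain \<alpha> \<beta> where \<alpha>: "\<rho> (gmat l 0) \<eta>1 = csc J \<alpha> \<eta>1" and \<beta>: "\<rho> (gmat l 0) \<eta>2 = csc J \<beta> \<eta>2"
      and "\<alpha> * cnj \<beta> = 1"
      by (rule gmat_diag_eigenvalues[OF l])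
    moreover have "\<alpha> * cnj \<alpha> = 1"
      using unimodular[OF l \<alpha>] by (simp flip: complex_norm_square)
    ultimately have "\<beta> = \<alpha>"
      by (metis complex_cnj_cancel_iff mult_cancel_left mult_zero_left zero_neq_one)
    then show ?thesis
      using l \<alpha> \<beta>
      by (simp add: stabilizer_cspan1_iff gmat_in_SU11 base_point_def rho_add flip: csc_add_vector)
  qed
  then show False
    using diagonal_fixed_point_fixed[OF Re_B_base_point] positive_point_not_fixed[OF Re_B_base_point]
    by blast
qed

lemma isotropic_eigenvector_in_frame_span:
  assumes l: "l > 0" and \<alpha>: "\<rho> (gmat l 0) \<eta>1 = csc J \<alpha> \<eta>1" and "cmod \<alpha> \<noteq> 1"
    and "B u u = 0" and u: "\<rho> (gmat l 0) u = csc J \<gamma> u"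
  shows "u \<in> frame_span"
proof (rule isotropic_orthogonal_eta_in_frame_span[OF \<open>B u u = 0\<close>])
  obtain \<alpha>' \<beta> where \<alpha>': "\<rho> (gmat l 0) \<eta>1 = csc J \<alpha>' \<eta>1" and \<beta>: "\<rho> (gmat l 0) \<eta>2 = csc J \<beta> \<eta>2"
    and "\<alpha>' * cnj \<beta> = 1"
    by (rule gmat_diag_eigenvalues[OF l])
  have "\<alpha>' = \<alpha>"
    using \<alpha> \<alpha>' csc_cancel_right[OF eta1_neq_0] by metis
  have SU11: "gmat l 0 \<in> SU11"
    using l by (simp add: gmat_in_SU11)
  \<comment> \<open>by unitarity, gamma conj(beta) B(u, eta2) = B(u, eta2), and similarly for eta1\<close>
  have "B u \<eta>2 = 0 \<or> \<gamma> * cnj \<beta> = 1" "B u \<eta>1 = 0 \<or> \<gamma> * cnj \<alpha> = 1"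
    using rho_B[OF SU11, of u \<eta>2] rho_B[OF SU11, of u \<eta>1] by (simp_all add: u \<alpha> \<beta> B_simps ac_simps)
  moreover have "\<gamma> * cnj \<beta> \<noteq> 1 \<or> \<gamma> * cnj \<alpha> \<noteq> 1"
  proof (rule ccontr)
    assume "\<not> (\<gamma> * cnj \<beta> \<noteq> 1 \<or> \<gamma> * cnj \<alpha> \<noteq> 1)"
    then have "cnj \<beta> = cnj \<alpha>"
      by (metis mult_left_cancel mult_zero_left zero_neq_one)
    with \<open>\<alpha>' * cnj \<beta> = 1\<close> \<open>\<alpha>' = \<alpha>\<close> have "complex_of_real ((cmod \<alpha>)\<^sup>2) = 1"
      by (simp only: complex_norm_square complex_cnj_cancel_iff)
    then have "(cmod \<alpha>)\<^sup>2 = 1"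
      using of_real_eq_1_iff by blast
    with \<open>cmod \<alpha> \<noteq> 1\<close> show False
      using norm_ge_zero[of \<alpha>] by (auto simp: power2_eq_1_iff)
  qed
  ultimately show "B u \<eta>1 = 0 \<or> B u \<eta>2 = 0"
    by blast
qed

lemma weyl_in_frame_stabilizer: "weyl \<in> stabilizer frame_span"
proof -
  obtain l \<alpha> where l: "l > 0" and \<alpha>: "\<rho> (gmat l 0) \<eta>1 = csc J \<alpha> \<eta>1" and "cmod \<alpha> \<noteq> 1"
    by (rule exists_loxodromic)
  have "\<rho> weyl \<eta> \<in> frame_span" if "\<eta> = \<eta>1 \<or> \<eta> = \<eta>2" for \<eta>
  proof -
    have "\<rho> (gmat (1 / l) 0) \<eta> \<in> cspan1 J \<eta>"
      using that l eta1_fixed eta2_fixed by auto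
    then obtain c where "\<rho> (gmat (1 / l) 0) \<eta> = csc J c \<eta>"
      by (auto simp: cspan1_iff)
    then obtain \<gamma> where "\<rho> (gmat l 0) (\<rho> weyl \<eta>) = csc J \<gamma> (\<rho> weyl \<eta>)"
      using rho_weyl_eigenvector[OF l] by blast
    moreover have "B (\<rho> weyl \<eta>) (\<rho> weyl \<eta>) = 0"
      using that by (auto simp: rho_B[OF weyl_in_SU11] eta_B)
    ultimately show ?thesis
      using isotropic_eigenvector_in_frame_span[OF l \<alpha> \<open>cmod \<alpha> \<noteq> 1\<close>] by blast
  qed
  then show ?thesis
    by (simp add: frame_stabilizerI weyl_in_SU11)
qed

lemma frame_stabilizer_all_unipotents:
  assumes "gmat 1 b \<in> stabilizer frame_span" and "b \<noteq> 0"
  shows "gmat 1 b' \<in> stabilizer frame_span"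
proof -
  \<comment> \<open>conjugating by g(l,0) rescales b by l^2, and inverting changes its sign\<close>
  have same_sign: "gmat 1 b' \<in> stabilizer frame_span" if "b' * b > 0" for b'
  proof -
    define l where "l = sqrt (b' / b)"
    have "b' / b > 0"
      using that by (simp add: zero_less_divide_iff zero_less_mult_iff)
    then have "l > 0" and "l\<^sup>2 * b = b'"
      using \<open>b \<noteq> 0\<close> by (simp_all add: l_def)
    then have "gmat 1 b' = (gmat l 0 ** gmat 1 b) ** gmat (1 / l) 0"
      by (simp add: gmat_conj_unipotent)
    also have "\<dots> \<in> stabilizer frame_span"
      using \<open>l > 0\<close> assms(1)
      by (intro stabilizer_mult csc_closed_frame_span gmat_diag_in_frame_stabilizer) simp_all
    finally show ?thesis .
  qed
  show ?thesis
  proof (cases "b' * b > 0")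
    case True
    then show ?thesis
      by (rule same_sign)
  next
    case False
    show ?thesis
    proof (cases "b' = 0")
      case True
      then show ?thesis
        using mat1_in_stabilizer[OF csc_closed_frame_span] by (simp add: gmat_1_0)
    next
      case False
      with \<open>b \<noteq> 0\<close> have "b' * b \<noteq> 0"
        by simp
      with \<open>\<not> b' * b > 0\<close> have "b' * b < 0"
        by linarith
      then have "(- b') * b > 0"
        by simp
      moreover have "gmat 1 b' ** gmat 1 (- b') = mat 1"
        by (simp add: gmat_1_mult gmat_1_0)
      ultimately show ?thesis
        using frame_stabilizer_inverse[OF gmat_in_SU11[of 1 b'] same_sign[of "- b'"]] by simp
    qed
  qed
qed

lemma rho_unipotent_eta2_notin_frame_span:
  assumes "b \<noteq> 0"
  shows "\<rho> (gmat 1 b) \<eta>2 \<notin> frame_span"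
proof
  assume "\<rho> (gmat 1 b) \<eta>2 \<in> frame_span"
  moreover have "\<rho> (gmat 1 b) \<eta>1 \<in> frame_span"
    using eta1_fixed cspan1_eta_subset_frame_span by auto
  ultimately have "gmat 1 b \<in> stabilizer frame_span"
    by (simp add: frame_stabilizerI gmat_in_SU11)
  then have "stabilizer frame_span = SU11"
    using assms csc_closed_frame_span gmat_diag_in_frame_stabilizer weyl_in_frame_stabilizer
      frame_stabilizer_all_unipotents
    by (intro stabilizer_eq_SU11I) auto
  with frame_stabilizer_neq_SU11 show False ..
qed


lemma rho_unipotent_eta1_unimodular:
  assumes z: "\<rho> (gmat 1 b) \<eta>1 = csc J z \<eta>1"
  shows "cmod z = 1"
proof -
  have eigenvalue: "\<exists>z. \<rho> (gmat l b') \<eta>1 = csc J z \<eta>1" if "l > 0" for l b'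
    using that eta1_fixed by (auto simp: cspan1_iff)
  have SU11: "gmat 1 b' \<in> SU11" "gmat 2 0 \<in> SU11" "gmat (1 / 2) 0 \<in> SU11" for b'
    by (simp_all add: gmat_in_SU11)
  note mult = cmod_eigenvalue_mult[OF _ _ eta1_neq_0]
  have "z \<noteq> 0"
    using z rho_eq_0_iff[OF SU11(1)[of b], of \<eta>1] eta1_neq_0 by auto
  \<comment> \<open>g(1,4b) is both the fourth power of g(1,b) and its conjugate by g(2,0)\<close>
  obtain z2 z4 where z2: "\<rho> (gmat 1 (b + b)) \<eta>1 = csc J z2 \<eta>1"
    and z4: "\<rho> (gmat 1 ((b + b) + (b + b))) \<eta>1 = csc J z4 \<eta>1"
    using eigenvalue[of 1 "b + b"] eigenvalue[of 1 "(b + b) + (b + b)"] by auto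
  have "cmod z4 = (cmod z)^4"
    using mult[OF SU11(1,1) z z] mult[OF SU11(1,1) z2 z2] z2 z4 by (simp add: gmat_1_mult power4_eq_xxxx)
  obtain a c e where a: "\<rho> (gmat 2 0) \<eta>1 = csc J a \<eta>1" and c: "\<rho> (gmat (1 / 2) 0) \<eta>1 = csc J c \<eta>1"
    and e: "\<rho> (gmat 2 0 ** gmat 1 b) \<eta>1 = csc J e \<eta>1"
    using eigenvalue[of 2 0] eigenvalue[of "1 / 2" 0] eigenvalue[of 2 "2 * b"]
    by (auto simp: gmat_diag_mult_unipotent)
  obtain \<nu> where "cmod \<nu> = 1" and \<nu>: "\<rho> (mat 1) \<eta>1 = csc J \<nu> \<eta>1"
    using rho_mat1 by blast
  have "cmod a * cmod c = 1"
    using mult[OF SU11(2,3) a c] gmat_diag_mult_inverse[of 2] \<nu> \<open>cmod \<nu> = 1\<close> by simp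
  moreover have "cmod z4 = cmod a * cmod z * cmod c"
    using mult[OF SU11_mult_closed[OF SU11(2,1)] SU11(3) e c] mult[OF SU11(2,1) a z e]
      gmat_conj_unipotent[of 2 b] z4
    by (simp add: algebra_simps)
  ultimately have "(cmod z)^4 = cmod z"
    using \<open>cmod z4 = (cmod z)^4\<close> by (simp add: algebra_simps)
  then have "(cmod z)^3 = 1"
    using \<open>z \<noteq> 0\<close> by (simp add: power3_eq_cube power4_eq_xxxx)
  then show ?thesis
    using power_eq_1_iff[of "cmod z" 3] by simp
qed

lemma Re_Kfun_pos:
  assumes "b \<noteq> 0"
  shows "Re (Kfun J B \<rho> \<eta>1 \<eta>2 b) > 0"
proof -
  have SU11: "gmat 1 b \<in> SU11"
    by (simp add: gmat_in_SU11)
  have "\<rho> (gmat 1 b) \<eta>1 \<in> cspan1 J \<eta>1"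
    using eta1_fixed by simp
  then obtain z where z: "\<rho> (gmat 1 b) \<eta>1 = csc J z \<eta>1"
    by (auto simp: cspan1_iff)
  then have "cmod z = 1"
    by (rule rho_unipotent_eta1_unimodular)
  then have "z \<noteq> 0" "cmod (inverse z) = 1"
    by (auto simp: norm_inverse)
  moreover have \<mu>: "csc J (inverse z) (\<rho> (gmat 1 b) \<eta>1) = \<eta>1"
    using z \<open>z \<noteq> 0\<close> by (simp add: csc_csc)
  ultimately obtain c where T2: "csc J (inverse z) (\<rho> (gmat 1 b) \<eta>2) = csc J (Kfun J B \<rho> \<eta>1 \<eta>2 b) \<eta>1 + \<eta>2 + c"
    and c: "B c \<eta>1 = 0" "B c \<eta>2 = 0"
    using Kfun_characterization by blast
  define K where "K = Kfun J B \<rho> \<eta>1 \<eta>2 b"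
  have "c \<noteq> 0"
  proof
    assume "c = 0"
    then have "\<rho> (gmat 1 b) \<eta>2 = csc J (z * K) \<eta>1 + csc J z \<eta>2"
      using T2 \<open>z \<noteq> 0\<close> csc_eq_iff_inverse[of "inverse z"] by (simp add: K_def csc_add_vector csc_csc)
    then show False
      using rho_unipotent_eta2_notin_frame_span[OF assms] frame_spanI by simp
  qed
  then have "Re (B c c) < 0"
    using frame_orthogonal_negative[OF c] by blast
  have "B (csc J (inverse z) (\<rho> (gmat 1 b) \<eta>2)) (csc J (inverse z) (\<rho> (gmat 1 b) \<eta>2)) = 0"
    using rho_B[OF SU11, of \<eta>2 \<eta>2] by (simp add: B_csc_self eta2_isotropic)
  then have "K + cnj K + B c c = 0"
    using c B_orthogonal_sym[of c \<eta>1] B_orthogonal_sym[of c \<eta>2]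
    by (simp add: T2 K_def B_simps eta_B) (simp add: add.commute)
  then have "2 * Re K = - Re (B c c)"
    by (simp add: complex_eq_iff)
  with \<open>Re (B c c) < 0\<close> show ?thesis
    by (simp add: K_def)
qed

end

lemma irreducible_frame_repI:
  assumes "hyp_setting J B" and "representation J B \<rho>" and "irreducible J B \<rho>"
    and "B \<eta>1 \<eta>1 = 0" and "B \<eta>2 \<eta>2 = 0" and "B \<eta>1 \<eta>2 = 1"
    and "\<forall>l>0. \<forall>b. \<rho> (gmat l b) \<eta>1 \<in> cspan1 J \<eta>1" and "\<forall>l>0. \<rho> (gmat l 0) \<eta>2 \<in> cspan1 J \<eta>2"
  shows "irreducible_frame_rep J B \<rho> \<eta>1 \<eta>2"
  using hyp_setting_imp_hyperbolic_form[OF assms(1)] assms(2-)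
  by (simp add: irreducible_frame_rep_def irreducible_frame_rep_axioms_def frame_rep_def
      projective_rep_def projective_rep_axioms_def null_frame_def null_frame_axioms_def)

theorem mainTheorem18:
  fixes J :: "'v::{real_inner,complete_space} \<Rightarrow> 'v"
    and B :: "'v \<Rightarrow> 'v \<Rightarrow> complex"
    and \<rho>1 \<rho>2 :: "complex^2^2 \<Rightarrow> 'v \<Rightarrow> 'v"
    and \<eta>1 \<eta>2 :: 'v
    and b :: real
  assumes "hyp_setting J B"
    and "representation J B \<rho>1" and "irreducible J B \<rho>1"
    and "representation J B \<rho>2" and "irreducible J B \<rho>2"
    and "ell B \<rho>1 = ell B \<rho>2"
    and "B \<eta>1 \<eta>1 = 0" and "B \<eta>2 \<eta>2 = 0" and "B \<eta>1 \<eta>2 = 1"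
    and "\<forall>l>0. \<forall>b'. \<rho>1 (gmat l b') \<eta>1 \<in> cspan1 J \<eta>1 \<and> \<rho>2 (gmat l b') \<eta>1 \<in> cspan1 J \<eta>1"
    and "\<forall>l>0. \<rho>1 (gmat l 0) \<eta>2 \<in> cspan1 J \<eta>2 \<and> \<rho>2 (gmat l 0) \<eta>2 \<in> cspan1 J \<eta>2"
    and "b \<noteq> 0"
  shows "Kfun J B \<rho>1 \<eta>1 \<eta>2 b + Kfun J B \<rho>2 \<eta>1 \<eta>2 b \<noteq> 0"
proof -
  have "Re (Kfun J B \<rho>1 \<eta>1 \<eta>2 b) > 0" "Re (Kfun J B \<rho>2 \<eta>1 \<eta>2 b) > 0"
    using assms by (auto intro!: irreducible_frame_rep.Re_Kfun_pos irreducible_frame_repI)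
  then have "Re (Kfun J B \<rho>1 \<eta>1 \<eta>2 b + Kfun J B \<rho>2 \<eta>1 \<eta>2 b) > 0"
    by simp
  then show ?thesis
    by (metis zero_complex.sel(1) less_irrefl)
qed

end
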